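(* Under the hypotheses and notation of the setting below (restriction $r=\sigma^{\mathrm{ASY}}\mathbf 1$, Assumptions A, B, C), let $(y_1^\infty,\dots,y_N^\infty)$ be the limit of the allocation vectors and $(\rho_i^\infty,\xi_i^\infty,x_i^\infty)$ a lex-optimal solution of (P3) with $y_i^\infty$ in place of $y_i^t$. Then $$\sum_{i=1}^N c_i^\top x_i^\infty - J^{\mathrm{MILP}}\le \sum_{s=1}^{S+1}\big(c_{i_s}^\top x_{i_s}^\infty - p_{i_s}(y_{i_s}^\infty)\big)+\frac{\sigma^{\mathrm{ASY}}}{\zeta_{\hat z}}\sum_{i=1}^N\big(c_i^\top\hat z_i - p_i(y_i^\infty)\big),$$ where $J^{\mathrm{MILP}}$ is the optimal cost of the MILP, $(\hat z_1,\dots,\hat z_N)$ is a Slater point as in Assumption C, and $i_1,i_2,\dots$ enumerate the (at most $S+1$) agents $i$ for which $z_i^\infty\notin X_i$, with $z_i^\infty$ the local optimal solution of the subproblem defining $p_i(y_i^\infty)$ (the first sum runs over these agents only).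
   Context: Data: for each $i\in\{1,\dots,N\}$, $c_i\in\mathbb{R}^{n_i}$, $A_i\in\mathbb{R}^{S\times n_i}$ (rows $A_i^s$), nonempty compact $X_i=\{x_i\in\mathbb{Z}^{Z_i}\times\mathbb{R}^{R_i}:D_ix_i\preceq d_i\}$; $b\in\mathbb{R}^S$ with components $b_s$. $\preceq$ is componentwise, $\mathbf 1$ the all-ones vector. MILP: minimize $\sum_ic_i^\top x_i$ s.t. $\sum_iA_ix_i\preceq b$, $x_i\in X_i$ (assumed feasible). Restricted LP (LP$_r$): minimize $\sum_ic_i^\top z_i$ s.t. $\sum_iA_iz_i\preceq b-r$, $z_i\in\mathrm{conv}(X_i)$. $p_i(y_i)$: optimal value of minimize $c_i^\top z_i$ s.t. $A_iz_i\preceq y_i$, $z_i\in\mathrm{conv}(X_i)$. Restriction: $L_i^s=\min_{x_i\in X_i}A_i^sx_i$; $(x_i^L,\tilde\ell_i)$ optimal for minimize $\ell_i$ over $x_i\in X_i,\ell_i\in\mathbb{R}$ s.t. $A_ix_i-L_i\preceq\ell_i\mathbf 1$; $\sigma^{\mathrm{ASY}}=(S+1)\max_i\max_s(A_i^sx_i^L-L_i^s)$; here $r=\sigma^{\mathrm{ASY}}\mathbf 1$. Assumption A: (LP$_r$) is feasible with unique optimal solution. Assumption B: step-sizes $\alpha^t\ge0$, $\sum_t\alpha^t=\infty$, $\sum_t(\alpha^t)^2<\infty$. Assumption C (Slater): there exist $\hat z_i\in\mathrm{conv}(X_i)$ with $\zeta_{\hat z}:=\min_s\big(b_s-r_s-\sum_iA_i^s\hat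 z_i\big)>0$. Algorithm over a connected undirected graph with neighbor sets $\mathcal N_i$, parameter $M>0$ sufficiently large, initialization $\sum_iy_i^0=b-r$. At each $t$, agent $i$: (P1) computes a primal-dual optimal pair $((z_i^t,v_i^t),\mu_i^t)$ of: minimize $c_i^\top z_i+Mv_i$ over $z_i\in\mathrm{conv}(X_i)$, $v_i\ge0$, s.t. $A_iz_i\preceq y_i^t+v_i\mathbf 1$ ($\mu_i^t$ the multiplier of this constraint); (P2) $y_i^{t+1}=y_i^t+\alpha^t\sum_{j\in\mathcal N_i}(\mu_i^t-\mu_j^t)$; (P3) lexicographic problem: minimize lexicographically $(\rho_i,\xi_i)$ over $x_i\in X_i,\rho_i\ge0,\xi_i$ s.t. $c_i^\top x_i\le\xi_i$, $A_ix_i\preceq y_i^t+\rho_i\mathbf 1$ (first minimize $\rho_i$, then $c_i^\top x_i$ with $\rho_i$ fixed at its minimum). The allocation sequence converges to $(y_1^\infty,\dots,y_N^\infty)$. *)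

theory Defs
  imports "HOL-Analysis.Analysis"
begin

text \<open>Agents are indexed by i < N, coupling constraints by s < S.
A vector of R^k is represented as a function nat => real that vanishes on indices >= k.
A_i is represented as As :: nat => nat => real with As s = row s of A_i.\<close>

definition dotp :: "nat \<Rightarrow> (nat \<Rightarrow> real) \<Rightarrow> (nat \<Rightarrow> real) \<Rightarrow> real" where
  "dotp k u w = (\<Sum>j<k. u j * w j)"

definition Xset :: "nat \<Rightarrow> nat \<Rightarrow> nat \<Rightarrow> (nat \<Rightarrow> nat \<Rightarrow> real) \<Rightarrow> (nat \<Rightarrow> real) \<Rightarrow> (nat \<Rightarrow> real) set" where
  "Xset k Zk mr Dm dv = {x. (\<forall>j<Zk. x j \<in> \<int>) \<and> (\<forall>j\<ge>k. x j = 0) \<and> (\<forall>q<mr. dotp k (Dm q) x \<le> dv q)}"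

text \<open>Convex hull (set of all finite convex combinations), written out since
nat => real is not instantiated as a real vector space in the library.\<close>
definition convh :: "(nat \<Rightarrow> real) set \<Rightarrow> (nat \<Rightarrow> real) set" where
  "convh X = {z. \<exists>F w. finite F \<and> F \<subseteq> X \<and> (\<forall>x\<in>F. 0 \<le> w x) \<and> sum w F = 1 \<and>
                      z = (\<lambda>j. \<Sum>x\<in>F. w x * x j)}"

definition sub_feas :: "nat \<Rightarrow> (nat \<Rightarrow> nat \<Rightarrow> real) \<Rightarrow> nat \<Rightarrow> (nat \<Rightarrow> real) set
     \<Rightarrow> (nat \<Rightarrow> real) \<Rightarrow> (nat \<Rightarrow> real) \<Rightarrow> bool" where
  "sub_feas k As S X yv z \<longleftrightarrow> z \<in> convh X \<and> (\<forall>s<S. dotp k (As s) z \<le> yv s)"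

definition pval :: "nat \<Rightarrow> (nat \<Rightarrow> real) \<Rightarrow> (nat \<Rightarrow> nat \<Rightarrow> real) \<Rightarrow> nat \<Rightarrow> (nat \<Rightarrow> real) set
     \<Rightarrow> (nat \<Rightarrow> real) \<Rightarrow> real" where
  "pval k cv As S X yv = Inf {dotp k cv z | z. sub_feas k As S X yv z}"

definition sub_opt :: "nat \<Rightarrow> (nat \<Rightarrow> real) \<Rightarrow> (nat \<Rightarrow> nat \<Rightarrow> real) \<Rightarrow> nat \<Rightarrow> (nat \<Rightarrow> real) set
     \<Rightarrow> (nat \<Rightarrow> real) \<Rightarrow> (nat \<Rightarrow> real) \<Rightarrow> bool" where
  "sub_opt k cv As S X yv z \<longleftrightarrow> sub_feas k As S X yv z \<and>
      (\<forall>z'. sub_feas k As S X yv z' \<longrightarrow> dotp k cv z \<le> dotp k cv z')"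

definition milp_feas :: "nat \<Rightarrow> nat \<Rightarrow> (nat \<Rightarrow> nat) \<Rightarrow> (nat \<Rightarrow> nat \<Rightarrow> nat \<Rightarrow> real) \<Rightarrow> (nat \<Rightarrow> real)
     \<Rightarrow> (nat \<Rightarrow> (nat \<Rightarrow> real) set) \<Rightarrow> (nat \<Rightarrow> nat \<Rightarrow> real) \<Rightarrow> bool" where
  "milp_feas N S n A b X x \<longleftrightarrow> (\<forall>i<N. x i \<in> X i) \<and>
      (\<forall>s<S. (\<Sum>i<N. dotp (n i) (A i s) (x i)) \<le> b s)"

definition J_milp :: "nat \<Rightarrow> nat \<Rightarrow> (nat \<Rightarrow> nat) \<Rightarrow> (nat \<Rightarrow> nat \<Rightarrow> real) \<Rightarrow> (nat \<Rightarrow> nat \<Rightarrow> nat \<Rightarrow> real)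
     \<Rightarrow> (nat \<Rightarrow> real) \<Rightarrow> (nat \<Rightarrow> (nat \<Rightarrow> real) set) \<Rightarrow> real" where
  "J_milp N S n c A b X = Inf {(\<Sum>i<N. dotp (n i) (c i) (x i)) | x. milp_feas N S n A b X x}"

definition lpr_feas :: "nat \<Rightarrow> nat \<Rightarrow> (nat \<Rightarrow> nat) \<Rightarrow> (nat \<Rightarrow> nat \<Rightarrow> nat \<Rightarrow> real) \<Rightarrow> (nat \<Rightarrow> real)
     \<Rightarrow> (nat \<Rightarrow> real) \<Rightarrow> (nat \<Rightarrow> (nat \<Rightarrow> real) set) \<Rightarrow> (nat \<Rightarrow> nat \<Rightarrow> real) \<Rightarrow> bool" where
  "lpr_feas N S n A b rv X z \<longleftrightarrow> (\<forall>i<N. z i \<in> convh (X i)) \<and>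
      (\<forall>s<S. (\<Sum>i<N. dotp (n i) (A i s) (z i)) \<le> b s - rv s)"

definition lpr_opt :: "nat \<Rightarrow> nat \<Rightarrow> (nat \<Rightarrow> nat) \<Rightarrow> (nat \<Rightarrow> nat \<Rightarrow> real) \<Rightarrow> (nat \<Rightarrow> nat \<Rightarrow> nat \<Rightarrow> real)
     \<Rightarrow> (nat \<Rightarrow> real) \<Rightarrow> (nat \<Rightarrow> real) \<Rightarrow> (nat \<Rightarrow> (nat \<Rightarrow> real) set) \<Rightarrow> (nat \<Rightarrow> nat \<Rightarrow> real) \<Rightarrow> bool" where
  "lpr_opt N S n c A b rv X z \<longleftrightarrow> lpr_feas N S n A b rv X z \<and>
      (\<forall>z'. lpr_feas N S n A b rv X z' \<longrightarrow>
          (\<Sum>i<N. dotp (n i) (c i) (z i)) \<le> (\<Sum>i<N. dotp (n i) (c i) (z' i)))"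

definition assumptionA :: "nat \<Rightarrow> nat \<Rightarrow> (nat \<Rightarrow> nat) \<Rightarrow> (nat \<Rightarrow> nat \<Rightarrow> real) \<Rightarrow> (nat \<Rightarrow> nat \<Rightarrow> nat \<Rightarrow> real)
     \<Rightarrow> (nat \<Rightarrow> real) \<Rightarrow> (nat \<Rightarrow> real) \<Rightarrow> (nat \<Rightarrow> (nat \<Rightarrow> real) set) \<Rightarrow> bool" where
  "assumptionA N S n c A b rv X \<longleftrightarrow> (\<exists>z. lpr_feas N S n A b rv X z) \<and>
      (\<exists>z. lpr_opt N S n c A b rv X z \<and>
           (\<forall>z'. lpr_opt N S n c A b rv X z' \<longrightarrow> (\<forall>i<N. z' i = z i)))"

definition assumptionB :: "(nat \<Rightarrow> real) \<Rightarrow> bool" where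
  "assumptionB \<alpha> \<longleftrightarrow> (\<forall>t. 0 \<le> \<alpha> t) \<and> filterlim (\<lambda>T. \<Sum>t<T. \<alpha> t) at_top sequentially \<and>
      summable (\<lambda>t. (\<alpha> t)\<^sup>2)"

definition zeta :: "nat \<Rightarrow> nat \<Rightarrow> (nat \<Rightarrow> nat) \<Rightarrow> (nat \<Rightarrow> nat \<Rightarrow> nat \<Rightarrow> real) \<Rightarrow> (nat \<Rightarrow> real)
     \<Rightarrow> (nat \<Rightarrow> real) \<Rightarrow> (nat \<Rightarrow> nat \<Rightarrow> real) \<Rightarrow> real" where
  "zeta N S n A b rv zh = Min ((\<lambda>s. b s - rv s - (\<Sum>i<N. dotp (n i) (A i s) (zh i))) ` {..<S})"

definition slater_point :: "nat \<Rightarrow> nat \<Rightarrow> (nat \<Rightarrow> nat) \<Rightarrow> (nat \<Rightarrow> nat \<Rightarrow> nat \<Rightarrow> real) \<Rightarrow> (nat \<Rightarrow> real)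
     \<Rightarrow> (nat \<Rightarrow> real) \<Rightarrow> (nat \<Rightarrow> (nat \<Rightarrow> real) set) \<Rightarrow> (nat \<Rightarrow> nat \<Rightarrow> real) \<Rightarrow> bool" where
  "slater_point N S n A b rv X zh \<longleftrightarrow> (\<forall>i<N. zh i \<in> convh (X i)) \<and> zeta N S n A b rv zh > 0"

definition Lmin :: "nat \<Rightarrow> (nat \<Rightarrow> nat \<Rightarrow> real) \<Rightarrow> (nat \<Rightarrow> real) set \<Rightarrow> nat \<Rightarrow> real" where
  "Lmin k As X s = Inf {dotp k (As s) x | x. x \<in> X}"

definition xL_opt :: "nat \<Rightarrow> (nat \<Rightarrow> nat \<Rightarrow> real) \<Rightarrow> nat \<Rightarrow> (nat \<Rightarrow> real) set
     \<Rightarrow> (nat \<Rightarrow> real) \<Rightarrow> real \<Rightarrow> bool" where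
  "xL_opt k As S X xl l \<longleftrightarrow> xl \<in> X \<and> (\<forall>s<S. dotp k (As s) xl - Lmin k As X s \<le> l) \<and>
      (\<forall>x l'. x \<in> X \<and> (\<forall>s<S. dotp k (As s) x - Lmin k As X s \<le> l') \<longrightarrow> l \<le> l')"

definition sigma_asy :: "nat \<Rightarrow> nat \<Rightarrow> (nat \<Rightarrow> nat) \<Rightarrow> (nat \<Rightarrow> nat \<Rightarrow> nat \<Rightarrow> real)
     \<Rightarrow> (nat \<Rightarrow> (nat \<Rightarrow> real) set) \<Rightarrow> (nat \<Rightarrow> nat \<Rightarrow> real) \<Rightarrow> real" where
  "sigma_asy N S n A X xL = real (S + 1) *
      Max ((\<lambda>(i, s). dotp (n i) (A i s) (xL i) - Lmin (n i) (A i) (X i) s) ` ({..<N} \<times> {..<S}))"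

definition p1_feas :: "nat \<Rightarrow> (nat \<Rightarrow> nat \<Rightarrow> real) \<Rightarrow> nat \<Rightarrow> (nat \<Rightarrow> real) set
     \<Rightarrow> (nat \<Rightarrow> real) \<Rightarrow> (nat \<Rightarrow> real) \<Rightarrow> real \<Rightarrow> bool" where
  "p1_feas k As S X yv z v \<longleftrightarrow> z \<in> convh X \<and> 0 \<le> v \<and> (\<forall>s<S. dotp k (As s) z \<le> yv s + v)"

definition p1_lagr :: "nat \<Rightarrow> (nat \<Rightarrow> real) \<Rightarrow> (nat \<Rightarrow> nat \<Rightarrow> real) \<Rightarrow> nat \<Rightarrow> real
     \<Rightarrow> (nat \<Rightarrow> real) \<Rightarrow> (nat \<Rightarrow> real) \<Rightarrow> (nat \<Rightarrow> real) \<Rightarrow> real \<Rightarrow> real" where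
  "p1_lagr k cv As S M yv mu z v =
     dotp k cv z + M * v + (\<Sum>s<S. mu s * (dotp k (As s) z - yv s - v))"

definition p1_dualfun :: "nat \<Rightarrow> (nat \<Rightarrow> real) \<Rightarrow> (nat \<Rightarrow> nat \<Rightarrow> real) \<Rightarrow> nat \<Rightarrow> (nat \<Rightarrow> real) set \<Rightarrow> real
     \<Rightarrow> (nat \<Rightarrow> real) \<Rightarrow> (nat \<Rightarrow> real) \<Rightarrow> ereal" where
  "p1_dualfun k cv As S X M yv mu =
     (INF zv \<in> convh X \<times> {0..}. ereal (p1_lagr k cv As S M yv mu (fst zv) (snd zv)))"

definition p1_pd_opt :: "nat \<Rightarrow> (nat \<Rightarrow> real) \<Rightarrow> (nat \<Rightarrow> nat \<Rightarrow> real) \<Rightarrow> nat \<Rightarrow> (nat \<Rightarrow> real) set \<Rightarrow> real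
     \<Rightarrow> (nat \<Rightarrow> real) \<Rightarrow> (nat \<Rightarrow> real) \<Rightarrow> real \<Rightarrow> (nat \<Rightarrow> real) \<Rightarrow> bool" where
  "p1_pd_opt k cv As S X M yv z v mu \<longleftrightarrow>
     p1_feas k As S X yv z v \<and>
     (\<forall>z' v'. p1_feas k As S X yv z' v' \<longrightarrow> dotp k cv z + M * v \<le> dotp k cv z' + M * v') \<and>
     (\<forall>s<S. 0 \<le> mu s) \<and>
     (\<forall>mu'. (\<forall>s<S. 0 \<le> mu' s) \<longrightarrow> p1_dualfun k cv As S X M yv mu' \<le> p1_dualfun k cv As S X M yv mu)"

definition p3_feas :: "nat \<Rightarrow> (nat \<Rightarrow> real) \<Rightarrow> (nat \<Rightarrow> nat \<Rightarrow> real) \<Rightarrow> nat \<Rightarrow> (nat \<Rightarrow> real) set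
     \<Rightarrow> (nat \<Rightarrow> real) \<Rightarrow> (nat \<Rightarrow> real) \<Rightarrow> real \<Rightarrow> real \<Rightarrow> bool" where
  "p3_feas k cv As S X yv x \<rho> \<xi> \<longleftrightarrow> x \<in> X \<and> 0 \<le> \<rho> \<and> dotp k cv x \<le> \<xi> \<and>
      (\<forall>s<S. dotp k (As s) x \<le> yv s + \<rho>)"

definition p3_lexopt :: "nat \<Rightarrow> (nat \<Rightarrow> real) \<Rightarrow> (nat \<Rightarrow> nat \<Rightarrow> real) \<Rightarrow> nat \<Rightarrow> (nat \<Rightarrow> real) set
     \<Rightarrow> (nat \<Rightarrow> real) \<Rightarrow> (nat \<Rightarrow> real) \<Rightarrow> real \<Rightarrow> real \<Rightarrow> bool" where
  "p3_lexopt k cv As S X yv x \<rho> \<xi> \<longleftrightarrow> p3_feas k cv As S X yv x \<rho> \<xi> \<and>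
      (\<forall>x' \<rho>' \<xi>'. p3_feas k cv As S X yv x' \<rho>' \<xi>' \<longrightarrow> \<rho> \<le> \<rho>') \<and>
      (\<forall>x' \<xi>'. p3_feas k cv As S X yv x' \<rho> \<xi>' \<longrightarrow> \<xi> \<le> \<xi>')"

definition conn_undirected :: "nat \<Rightarrow> (nat \<Rightarrow> nat set) \<Rightarrow> bool" where
  "conn_undirected N Nb \<longleftrightarrow> (\<forall>i<N. Nb i \<subseteq> {..<N} \<and> (\<forall>j\<in>Nb i. i \<in> Nb j)) \<and>
      (\<forall>i<N. \<forall>j<N. (i, j) \<in> {(a, b). a < N \<and> b \<in> Nb a}\<^sup>*)"

definition algo_run :: "nat \<Rightarrow> nat \<Rightarrow> (nat \<Rightarrow> nat) \<Rightarrow> (nat \<Rightarrow> nat \<Rightarrow> real) \<Rightarrow> (nat \<Rightarrow> nat \<Rightarrow> nat \<Rightarrow> real)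
     \<Rightarrow> (nat \<Rightarrow> real) \<Rightarrow> (nat \<Rightarrow> real) \<Rightarrow> (nat \<Rightarrow> (nat \<Rightarrow> real) set) \<Rightarrow> (nat \<Rightarrow> nat set) \<Rightarrow> real
     \<Rightarrow> (nat \<Rightarrow> real) \<Rightarrow> (nat \<Rightarrow> nat \<Rightarrow> nat \<Rightarrow> real) \<Rightarrow> (nat \<Rightarrow> nat \<Rightarrow> nat \<Rightarrow> real)
     \<Rightarrow> (nat \<Rightarrow> nat \<Rightarrow> real) \<Rightarrow> (nat \<Rightarrow> nat \<Rightarrow> nat \<Rightarrow> real) \<Rightarrow> bool" where
  "algo_run N S n c A b rv X Nb M \<alpha> y z v mu \<longleftrightarrow>
     (\<forall>s<S. (\<Sum>i<N. y 0 i s) = b s - rv s) \<and>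
     (\<forall>t. \<forall>i<N. p1_pd_opt (n i) (c i) (A i) S (X i) M (y t i) (z t i) (v t i) (mu t i)) \<and>
     (\<forall>t. \<forall>i<N. \<forall>s<S. y (Suc t) i s = y t i s + \<alpha> t * (\<Sum>j\<in>Nb i. mu t i s - mu t j s))"

end

theory Submission
  imports Defs
begin

text \<open>Each local value p_i is replaced by the value P_i of the elastic problem (P1), whose
violation is priced at M. The P_i are convex and M-Lipschitz, and the optimal multipliers of (P1)
are subgradients of P_i of total mass at most M, so the allocation update is a subgradient step
for minimizing the sum of the P_i over allocations summing to b - r. Writing the allocation gap
to a reference allocation as a skew flow on the edges, the squared flow is a Lyapunov function,
and the step-size conditions force the sum of the P_i at the limit allocation down to the value
J_r of (LP_r). Mixing with the Slater point shows that violating the coupling constraints by V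
saves at most (c'z_hat - J_r) V / zeta, so for M beyond this threshold the limit allocation
carries no violation and the local minimizers z_i at the limit form an optimal, hence the unique,
solution of (LP_r).

A unique optimum of (LP_r) has at most S blocks outside their X_i: each such block can be moved
both ways along a segment inside conv X_i, and more than S of these directions are linearly
dependent modulo the S coupling rows, which yields a second optimum. For the remaining agents
(P3) is solved without violation at cost at most p_i. Finally, an MILP solution violates the
restricted constraints by at most sigma, and mixing it with the Slater point gives
J_MILP \<ge> J_r - sigma / zeta (c'z_hat - J_r).\<close>

section \<open>Linear dependence and convex hulls\<close>

lemma exists_linear_dependence:
  fixes a :: "'a \<Rightarrow> nat \<Rightarrow> real"
  assumes "finite J" "card J > m"
  shows "\<exists>l. (\<exists>j\<in>J. l j \<noteq> 0) \<and> (\<forall>c<m. (\<Sum>j\<in>J. l j * a j c) = 0)"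
  using assms
proof (induction m arbitrary: J a)
  case 0
  then obtain j where "j \<in> J" by (metis card.empty ex_in_conv less_irrefl)
  then show ?case by (rule_tac x="\<lambda>_. 1" in exI) auto
next
  case (Suc m)
  show ?case
  proof (cases "\<forall>j\<in>J. a j m = 0")
    case True
    from Suc.IH[of J a] Suc.prems obtain l
      where l: "\<exists>j\<in>J. l j \<noteq> 0" "\<forall>c<m. (\<Sum>j\<in>J. l j * a j c) = 0" by auto
    then have "\<forall>c<Suc m. (\<Sum>j\<in>J. l j * a j c) = 0"
      using True by (auto simp: less_Suc_eq)
    with l show ?thesis by blast
  next
    case False
    then obtain j0 where j0: "j0 \<in> J" "a j0 m \<noteq> 0" by auto
    define J' where "J' = J - {j0}"
    define b where "b j c = a j c - (a j m / a j0 m) * a j0 c" for j c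
    have "finite J'" "card J' > m" using Suc.prems j0 unfolding J'_def by auto
    from Suc.IH[OF this] obtain l
      where l: "\<exists>j\<in>J'. l j \<noteq> 0" "\<forall>c<m. (\<Sum>j\<in>J'. l j * b j c) = 0" by blast
    \<comment> \<open>eliminate the coordinate m with the pivot j0, then solve for the weight of j0\<close>
    define l' where "l' j = (if j = j0 then - (\<Sum>i\<in>J'. l i * a i m) / a j0 m else l j)" for j
    have key: "(\<Sum>j\<in>J. l' j * a j c) = (\<Sum>j\<in>J'. l j * b j c)" for c
    proof -
      have "(\<Sum>j\<in>J. l' j * a j c) = l' j0 * a j0 c + (\<Sum>j\<in>J'. l' j * a j c)"
        unfolding J'_def using Suc.prems j0 by (simp add: sum.remove)
      also have "(\<Sum>j\<in>J'. l' j * a j c) = (\<Sum>j\<in>J'. l j * a j c)"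
        unfolding l'_def J'_def by (intro sum.cong) auto
      also have "(\<Sum>j\<in>J'. l j * b j c)
          = (\<Sum>j\<in>J'. l j * a j c) - (\<Sum>j\<in>J'. l j * a j m) / a j0 m * a j0 c"
        unfolding b_def
        by (simp add: algebra_simps sum_subtractf sum_distrib_left sum_divide_distrib sum_distrib_right)
      ultimately show ?thesis unfolding l'_def by (simp add: algebra_simps)
    qed
    have "\<forall>c<Suc m. (\<Sum>j\<in>J. l' j * a j c) = 0"
      using key l j0 by (auto simp: less_Suc_eq b_def)
    moreover have "\<exists>j\<in>J. l' j \<noteq> 0" using l(1) unfolding l'_def J'_def by auto
    ultimately show ?thesis by blast
  qed
qed

lemma dotp_linear_comb: "dotp k u (\<lambda>j. a * z1 j + b * z2 j) = a * dotp k u z1 + b * dotp k u z2"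
  unfolding dotp_def by (simp add: algebra_simps sum.distrib sum_distrib_left)

lemma dotp_add_scaled: "dotp k u (\<lambda>j. z j + t * d j) = dotp k u z + t * dotp k u d"
  unfolding dotp_def by (simp add: algebra_simps sum.distrib sum_distrib_left)

lemma dotp_sum_comb: "finite F \<Longrightarrow> dotp k u (\<lambda>j. \<Sum>x\<in>F. w x * x j) = (\<Sum>x\<in>F. w x * dotp k u x)"
  unfolding dotp_def by (simp add: sum_distrib_left sum_distrib_right algebra_simps sum.swap[of _ F])

lemma continuous_on_dotp: "continuous_on UNIV (\<lambda>z::nat \<Rightarrow> real. dotp k u z)"
  unfolding dotp_def
  by (intro continuous_on_sum continuous_on_mult continuous_on_const continuous_on_product_coordinates)

lemma dotp_attains_min:
  assumes "compact X" "X \<noteq> {}"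
  obtains x where "x \<in> X" "\<And>x'. x' \<in> X \<Longrightarrow> dotp k u x \<le> dotp k u x'"
  using continuous_attains_inf[OF assms, of "dotp k u"] continuous_on_subset[OF continuous_on_dotp]
  by blast

definition convex_rep :: "(nat \<Rightarrow> real) set \<Rightarrow> (nat \<Rightarrow> real) set \<Rightarrow> ((nat \<Rightarrow> real) \<Rightarrow> real)
    \<Rightarrow> (nat \<Rightarrow> real) \<Rightarrow> bool" where
  "convex_rep X F w z \<longleftrightarrow> finite F \<and> F \<subseteq> X \<and> (\<forall>x\<in>F. 0 \<le> w x) \<and> sum w F = 1 \<and>
     z = (\<lambda>j. \<Sum>x\<in>F. w x * x j)"

lemma convh_iff_convex_rep: "z \<in> convh X \<longleftrightarrow> (\<exists>F w. convex_rep X F w z)"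
  unfolding convh_def convex_rep_def by blast

lemma convh_inc: "x \<in> X \<Longrightarrow> x \<in> convh X"
  unfolding convh_def by (intro CollectI exI[of _ "{x}"] exI[of _ "\<lambda>_. 1"]) auto

lemma convh_convex_comb:
  assumes "z1 \<in> convh X" "z2 \<in> convh X" "0 \<le> \<theta>" "\<theta> \<le> 1"
  shows "(\<lambda>j. \<theta> * z1 j + (1 - \<theta>) * z2 j) \<in> convh X"
proof -
  obtain F1 w1 where 1: "convex_rep X F1 w1 z1" using assms(1) convh_iff_convex_rep by blast
  obtain F2 w2 where 2: "convex_rep X F2 w2 z2" using assms(2) convh_iff_convex_rep by blast
  define F where "F = F1 \<union> F2"
  define w where "w x = \<theta> * (if x \<in> F1 then w1 x else 0) + (1 - \<theta>) * (if x \<in> F2 then w2 x else 0)" for x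
  have fin: "finite F" using 1 2 unfolding F_def convex_rep_def by auto
  have restrict: "(\<Sum>x\<in>F. (if x \<in> G then v x else 0) * g x) = (\<Sum>x\<in>G. v x * g x)"
    if "G \<subseteq> F" for G and v g :: "_ \<Rightarrow> real"
  proof -
    have "(\<Sum>x\<in>F. (if x \<in> G then v x else 0) * g x) = (\<Sum>x\<in>F. if x \<in> G then v x * g x else 0)"
      by (intro sum.cong) auto
    also have "\<dots> = (\<Sum>x\<in>F \<inter> G. v x * g x)" using fin by (simp add: sum.inter_restrict)
    also have "F \<inter> G = G" using that by auto
    finally show ?thesis .
  qed
  have comb: "(\<Sum>x\<in>F. w x * g x) = \<theta> * (\<Sum>x\<in>F1. w1 x * g x) + (1 - \<theta>) * (\<Sum>x\<in>F2. w2 x * g x)"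
    for g :: "_ \<Rightarrow> real"
  proof -
    have "(\<Sum>x\<in>F. w x * g x) = (\<Sum>x\<in>F. \<theta> * ((if x \<in> F1 then w1 x else 0) * g x)
        + (1 - \<theta>) * ((if x \<in> F2 then w2 x else 0) * g x))"
      unfolding w_def by (intro sum.cong) (simp_all add: algebra_simps)
    also have "\<dots> = \<theta> * (\<Sum>x\<in>F. (if x \<in> F1 then w1 x else 0) * g x)
        + (1 - \<theta>) * (\<Sum>x\<in>F. (if x \<in> F2 then w2 x else 0) * g x)"
      by (simp add: sum.distrib sum_distrib_left)
    also have "\<dots> = \<theta> * (\<Sum>x\<in>F1. w1 x * g x) + (1 - \<theta>) * (\<Sum>x\<in>F2. w2 x * g x)"
      using restrict[of F1] restrict[of F2] unfolding F_def by simp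
    finally show ?thesis .
  qed
  have "convex_rep X F w (\<lambda>j. \<theta> * z1 j + (1 - \<theta>) * z2 j)"
    unfolding convex_rep_def
  proof (intro conjI)
    show "sum w F = 1" using comb[of "\<lambda>_. 1"] 1 2 unfolding convex_rep_def by simp
    show "(\<lambda>j. \<theta> * z1 j + (1 - \<theta>) * z2 j) = (\<lambda>j. \<Sum>x\<in>F. w x * x j)"
      using comb 1 2 unfolding convex_rep_def by auto
    show "\<forall>x\<in>F. 0 \<le> w x" using 1 2 assms(3,4) unfolding w_def convex_rep_def by auto
  qed (use fin 1 2 in \<open>auto simp: F_def convex_rep_def\<close>)
  then show ?thesis using convh_iff_convex_rep by blast
qed

lemma convh_dotp_lower_bound:
  assumes "\<And>x. x \<in> X \<Longrightarrow> m \<le> dotp k u x" "z \<in> convh X"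
  shows "m \<le> dotp k u z"
proof -
  obtain F w where F: "convex_rep X F w z" using assms(2) convh_iff_convex_rep by blast
  have "m = (\<Sum>x\<in>F. w x * m)" using F unfolding convex_rep_def by (simp add: sum_distrib_right[symmetric])
  also have "\<dots> \<le> (\<Sum>x\<in>F. w x * dotp k u x)"
    using F assms(1) unfolding convex_rep_def by (intro sum_mono mult_left_mono) auto
  also have "\<dots> = dotp k u z" using F dotp_sum_comb unfolding convex_rep_def by simp
  finally show ?thesis .
qed

lemma exists_weight_shift_to_zero:
  fixes w \<mu> :: "'a \<Rightarrow> real"
  assumes fin: "finite F" and w0: "\<forall>x\<in>F. 0 \<le> w x"
    and \<mu>0: "(\<Sum>x\<in>F. \<mu> x) = 0" and \<mu>nz: "\<exists>x\<in>F. \<mu> x \<noteq> 0"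
  obtains t x1 where "x1 \<in> F" "w x1 - t * \<mu> x1 = 0" "\<forall>x\<in>F. 0 \<le> w x - t * \<mu> x"
proof -
  define Pos where "Pos = {x\<in>F. \<mu> x > 0}"
  have "Pos \<noteq> {}"
  proof
    assume "Pos = {}"
    then have "\<forall>x\<in>F. 0 \<le> - \<mu> x" unfolding Pos_def by (auto simp: not_less)
    moreover have "(\<Sum>x\<in>F. - \<mu> x) = 0" using \<mu>0 by (simp add: sum_negf)
    ultimately have "\<forall>x\<in>F. - \<mu> x = 0" by (simp add: sum_nonneg_eq_0_iff[OF fin])
    then show False using \<mu>nz by auto
  qed
  have fPos: "finite Pos" using fin unfolding Pos_def by auto
  \<comment> \<open>the largest step keeping all weights nonnegative\<close>
  define t where "t = Min ((\<lambda>x. w x / \<mu> x) ` Pos)"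
  have "t \<in> (\<lambda>x. w x / \<mu> x) ` Pos" unfolding t_def using fPos \<open>Pos \<noteq> {}\<close> by (intro Min_in) simp_all
  then obtain x1 where x1: "x1 \<in> Pos" "t = w x1 / \<mu> x1" by blast
  have tle: "t \<le> w x / \<mu> x" if "x \<in> Pos" for x unfolding t_def using fPos that by (intro Min_le) simp_all
  have x1F: "x1 \<in> F" and \<mu>x1: "\<mu> x1 > 0" using x1(1) unfolding Pos_def by blast+
  then have t0: "0 \<le> t" using x1(2) w0 by simp
  have "0 \<le> w x - t * \<mu> x" if xF: "x \<in> F" for x
  proof (cases "\<mu> x > 0")
    case True
    then have "t \<le> w x / \<mu> x" using tle xF unfolding Pos_def by auto
    then show ?thesis using True by (simp add: field_simps)
  next
    case False
    then have "t * \<mu> x \<le> 0" using t0 by (simp add: mult_nonneg_nonpos)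
    then show ?thesis using w0 xF by auto
  qed
  moreover have "w x1 - t * \<mu> x1 = 0" using x1(2) \<mu>x1 by simp
  ultimately show ?thesis using that x1F by blast
qed

lemma convex_rep_drop_point:
  assumes X0: "\<forall>x\<in>X. \<forall>j\<ge>k. x j = 0" and F: "convex_rep X F w z" and big: "Suc k < card F"
  shows "\<exists>F' w'. F' \<subset> F \<and> convex_rep X F' w' z"
proof -
  have fin: "finite F" and FX: "F \<subseteq> X" and w0: "\<forall>x\<in>F. 0 \<le> w x" and w1: "sum w F = 1"
    and z: "z = (\<lambda>j. \<Sum>x\<in>F. w x * x j)" using F unfolding convex_rep_def by auto
  \<comment> \<open>more than k + 1 points of R^k are affinely dependent\<close>
  define a where "a x c = (if c < k then x c else 1)" for x :: "nat \<Rightarrow> real" and c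
  obtain \<mu> where \<mu>: "\<exists>x\<in>F. \<mu> x \<noteq> 0" "\<forall>c<Suc k. (\<Sum>x\<in>F. \<mu> x * a x c) = 0"
    using exists_linear_dependence[OF fin big, of a] by blast
  have \<mu>sum: "(\<Sum>x\<in>F. \<mu> x) = 0" using \<mu>(2)[rule_format, of k] unfolding a_def by simp
  have \<mu>coord: "(\<Sum>x\<in>F. \<mu> x * x c) = 0" for c
  proof (cases "c < k")
    case True then show ?thesis using \<mu>(2)[rule_format, of c] unfolding a_def by simp
  next
    case False then show ?thesis using X0 FX by (intro sum.neutral) auto
  qed
  obtain t x1 where x1F: "x1 \<in> F" and x1: "w x1 - t * \<mu> x1 = 0"
    and nonneg: "\<forall>x\<in>F. 0 \<le> w x - t * \<mu> x"
    using exists_weight_shift_to_zero[OF fin w0 \<mu>sum \<mu>(1)] by blast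
  define w' where "w' x = w x - t * \<mu> x" for x
  have shift: "(\<Sum>x\<in>F - {x1}. w' x * g x) = (\<Sum>x\<in>F. w x * g x) - t * (\<Sum>x\<in>F. \<mu> x * g x)"
    for g :: "_ \<Rightarrow> real"
    using fin x1F x1
    by (simp add: sum.remove w'_def algebra_simps sum_subtractf sum_distrib_left)
  have "sum w' (F - {x1}) = 1" using shift[of "\<lambda>_. 1"] \<mu>sum w1 by simp
  moreover have "(\<Sum>x\<in>F - {x1}. w' x * x j) = z j" for j using shift[of "\<lambda>x. x j"] \<mu>coord z by simp
  ultimately have "convex_rep X (F - {x1}) w' z"
    unfolding convex_rep_def using fin FX nonneg by (auto simp: w'_def)
  moreover have "F - {x1} \<subset> F" using x1F by auto
  ultimately show ?thesis by blast
qed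

lemma caratheodory_convh:
  assumes X0: "\<forall>x\<in>X. \<forall>j\<ge>k. x j = 0" and z: "z \<in> convh X"
  shows "\<exists>F w. convex_rep X F w z \<and> card F \<le> Suc k"
proof -
  have "\<exists>F' w'. convex_rep X F' w' z \<and> card F' \<le> Suc k" if "convex_rep X F w z" for F w
    using that
  proof (induction "card F" arbitrary: F w rule: less_induct)
    case less
    show ?case
    proof (cases "card F \<le> Suc k")
      case False
      then obtain F' w' where F': "F' \<subset> F" "convex_rep X F' w' z"
        using convex_rep_drop_point[OF X0 less.prems] by auto
      have "card F' < card F" using F'(1) less.prems psubset_card_mono
        unfolding convex_rep_def by blast
      then show ?thesis using less.hyps F'(2) by blast
    qed (use less.prems in blast)
  qed
  then show ?thesis using z convh_iff_convex_rep by blast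
qed

lemma convex_rep_weight_lt_1:
  assumes F: "convex_rep X F w z" and nz: "z \<notin> X" and x0: "x0 \<in> F"
  shows "w x0 < 1"
proof (rule ccontr)
  assume "\<not> w x0 < 1"
  have fin: "finite F" and w0: "\<forall>x\<in>F. 0 \<le> w x" and w1: "sum w F = 1"
    and z: "z = (\<lambda>j. \<Sum>x\<in>F. w x * x j)" and FX: "F \<subseteq> X" using F unfolding convex_rep_def by auto
  have split: "(\<Sum>x\<in>F. g x) = g x0 + (\<Sum>x\<in>F - {x0}. g x)" for g :: "_ \<Rightarrow> real"
    using fin x0 by (simp add: sum.remove)
  have "w x0 \<le> sum w F" using fin w0 x0 by (intro member_le_sum) auto
  with \<open>\<not> w x0 < 1\<close> w1 have wx0: "w x0 = 1" by simp
  then have "sum w (F - {x0}) = 0" using split[of w] w1 by simp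
  then have "\<forall>x\<in>F - {x0}. w x = 0" using sum_nonneg_eq_0_iff[of "F - {x0}" w] fin w0 by auto
  then have "z = x0" unfolding z using split[of "\<lambda>x. w x * x _"] wx0 by auto
  then show False using nz x0 FX by auto
qed

lemma two_sided_direction_in_convh:
  assumes z: "z \<in> convh X" and nz: "z \<notin> X"
  shows "\<exists>d. d \<noteq> (\<lambda>_. 0) \<and> (\<forall>t. \<bar>t\<bar> \<le> 1 \<longrightarrow> (\<lambda>j. z j + t * d j) \<in> convh X)"
proof -
  obtain F w where F: "convex_rep X F w z" using z convh_iff_convex_rep by blast
  have fin: "finite F" and FX: "F \<subseteq> X" and w0: "\<forall>x\<in>F. 0 \<le> w x" and w1: "sum w F = 1"
    and zF: "z = (\<lambda>j. \<Sum>x\<in>F. w x * x j)" using F unfolding convex_rep_def by auto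
  have "\<exists>x\<in>F. w x > 0"
  proof (rule ccontr)
    assume "\<not> (\<exists>x\<in>F. w x > 0)"
    then have "sum w F \<le> 0" by (intro sum_nonpos) (auto simp: not_less)
    then show False using w1 by simp
  qed
  then obtain x0 where x0: "x0 \<in> F" "w x0 > 0" by blast
  define w0 where "w0 = w x0"
  have w0_lt: "w0 < 1" unfolding w0_def by (rule convex_rep_weight_lt_1[OF F nz x0(1)])
  define F' where "F' = F - {x0}"
  have split: "(\<Sum>x\<in>F. g x) = g x0 + (\<Sum>x\<in>F'. g x)" for g :: "_ \<Rightarrow> real"
    unfolding F'_def using fin x0(1) by (simp add: sum.remove)
  \<comment> \<open>z lies strictly between the vertex x0 and the normalized remainder z'\<close>
  define z' where "z' = (\<lambda>j. \<Sum>x\<in>F'. (w x / (1 - w0)) * x j)"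
  have z'c: "z' \<in> convh X"
  proof -
    have "sum (\<lambda>x. w x / (1 - w0)) F' = 1"
      using split[of w] w1 w0_lt unfolding w0_def by (simp add: sum_divide_distrib[symmetric])
    then have "convex_rep X F' (\<lambda>x. w x / (1 - w0)) z'"
      using fin FX w0 w0_lt unfolding convex_rep_def F'_def z'_def by auto
    then show ?thesis using convh_iff_convex_rep by blast
  qed
  have zeq: "z j = w0 * x0 j + (1 - w0) * z' j" for j
  proof -
    have "(1 - w0) * z' j = (\<Sum>x\<in>F'. w x * x j)"
      unfolding z'_def using w0_lt by (simp add: sum_distrib_left)
    then show ?thesis unfolding zF using split[of "\<lambda>x. w x * x j"] unfolding w0_def by simp
  qed
  define t0 where "t0 = min w0 (1 - w0)"
  have t0: "t0 > 0" "t0 \<le> w0" "t0 \<le> 1 - w0" unfolding t0_def using x0 w0_lt unfolding w0_def by auto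
  define d where "d = (\<lambda>j. t0 * (x0 j - z' j))"
  have "d \<noteq> (\<lambda>_. 0)"
  proof
    assume "d = (\<lambda>_. 0)"
    then have "t0 * (x0 j - z' j) = 0" for j unfolding d_def by meson
    then have "x0 j = z' j" for j using t0(1) by simp
    then have "z = x0" using zeq by (auto simp: algebra_simps)
    then show False using nz x0(1) FX by auto
  qed
  moreover have "(\<lambda>j. z j + t * d j) \<in> convh X" if "\<bar>t\<bar> \<le> 1" for t
  proof -
    define \<theta> where "\<theta> = w0 + t * t0"
    have "\<bar>t * t0\<bar> \<le> t0" using that t0(1) by (simp add: abs_mult mult_le_cancel_right1)
    then have "t * t0 \<le> t0" "- t0 \<le> t * t0" by (simp_all add: abs_le_iff)
    then have "0 \<le> \<theta>" "\<theta> \<le> 1" unfolding \<theta>_def using t0 by linarith+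
    moreover have "(\<lambda>j. z j + t * d j) = (\<lambda>j. \<theta> * x0 j + (1 - \<theta>) * z' j)"
      unfolding \<theta>_def d_def using zeq by (auto simp: algebra_simps)
    ultimately show ?thesis using convh_convex_comb[OF convh_inc z'c] x0(1) FX by auto
  qed
  ultimately show ?thesis by blast
qed

text \<open>In the product topology of nat \<Rightarrow> real the hull of a compact set is compact: by
Caratheodory it is the continuous image of the compact set of weighted (k+1)-tuples of points.\<close>

definition simplex_tuples :: "nat \<Rightarrow> (nat \<Rightarrow> real) set \<Rightarrow> (nat \<Rightarrow> real \<times> (nat \<Rightarrow> real)) set" where
  "simplex_tuples K X = {f. (\<forall>j\<le>K. f j \<in> {0..1} \<times> X) \<and> (\<forall>j>K. f j = (0, \<lambda>_. 0)) \<and>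
     (\<Sum>j\<le>K. fst (f j)) = 1}"

definition tuple_point :: "nat \<Rightarrow> (nat \<Rightarrow> real \<times> (nat \<Rightarrow> real)) \<Rightarrow> nat \<Rightarrow> real" where
  "tuple_point K f = (\<lambda>c. \<Sum>j\<le>K. fst (f j) * snd (f j) c)"

lemma continuous_on_weight: "continuous_on UNIV (\<lambda>f::nat \<Rightarrow> real \<times> (nat \<Rightarrow> real). fst (f j))"
  by (intro continuous_on_fst continuous_on_product_coordinates)

lemma continuous_on_tuple_point: "continuous_on UNIV (tuple_point K)"
proof (rule continuous_on_coordinatewise_then_product)
  fix c
  have "continuous_on UNIV (\<lambda>f::nat \<Rightarrow> real \<times> (nat \<Rightarrow> real). snd (f j) c)" for j
  proof (rule continuous_on_product_then_coordinatewise)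
    show "continuous_on UNIV (\<lambda>f::nat \<Rightarrow> real \<times> (nat \<Rightarrow> real). snd (f j))"
      by (intro continuous_on_snd continuous_on_product_coordinates)
  qed
  then show "continuous_on UNIV (\<lambda>f. tuple_point K f c)"
    unfolding tuple_point_def by (intro continuous_on_sum continuous_on_mult continuous_on_weight)
qed

lemma compact_simplex_tuples:
  assumes "compact X"
  shows "compact (simplex_tuples K X)"
proof -
  define T where "T j = (if j \<le> K then {0..1::real} \<times> X else {(0::real, \<lambda>_::nat. 0::real)})" for j
  have "compactin (product_topology (\<lambda>_. euclidean) UNIV) (PiE UNIV T)"
    unfolding compactin_PiE T_def using assms by (auto intro: compact_Times)
  then have "compact (PiE UNIV T)" by (simp add: euclidean_product_topology)
  moreover have "closed {f::nat \<Rightarrow> real \<times> (nat \<Rightarrow> real). (\<Sum>j\<le>K. fst (f j)) = 1}"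
    by (intro closed_Collect_eq continuous_on_sum continuous_on_weight continuous_on_const)
  moreover have "simplex_tuples K X = PiE UNIV T \<inter> {f. (\<Sum>j\<le>K. fst (f j)) = 1}"
  proof (rule set_eqI)
    fix f :: "nat \<Rightarrow> real \<times> (nat \<Rightarrow> real)"
    have "(\<forall>j. f j \<in> T j) \<longleftrightarrow> (\<forall>j\<le>K. f j \<in> {0..1} \<times> X) \<and> (\<forall>j>K. f j = (0, \<lambda>_. 0))"
      unfolding T_def by (metis empty_iff insert_iff not_less)
    then show "f \<in> simplex_tuples K X \<longleftrightarrow> f \<in> PiE UNIV T \<inter> {f. (\<Sum>j\<le>K. fst (f j)) = 1}"
      unfolding simplex_tuples_def PiE_UNIV_domain by (simp add: Pi_iff)
  qed
  ultimately show ?thesis by (simp add: compact_Int_closed)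
qed

lemma tuple_point_in_convh:
  assumes "f \<in> simplex_tuples K X"
  shows "tuple_point K f \<in> convh X"
proof -
  have f: "\<forall>j\<le>K. f j \<in> {0..1} \<times> X" "(\<Sum>j\<le>K. fst (f j)) = 1"
    using assms unfolding simplex_tuples_def by auto
  define F where "F = (\<lambda>j. snd (f j)) ` {..K}"
  define w where "w x = (\<Sum>j\<in>{j\<in>{..K}. snd (f j) = x}. fst (f j))" for x
  have comb: "(\<Sum>x\<in>F. w x * g x) = (\<Sum>j\<le>K. fst (f j) * g (snd (f j)))" for g :: "_ \<Rightarrow> real"
  proof -
    have "(\<Sum>j\<le>K. fst (f j) * g (snd (f j))) =
          (\<Sum>x\<in>F. \<Sum>j\<in>{j\<in>{..K}. snd (f j) = x}. fst (f j) * g (snd (f j)))"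
      unfolding F_def by (rule sum.image_gen) simp
    also have "\<dots> = (\<Sum>x\<in>F. w x * g x)"
      unfolding w_def sum_distrib_right by (intro sum.cong refl) auto
    finally show ?thesis by simp
  qed
  have "finite F" "F \<subseteq> X" using f(1) unfolding F_def by auto
  moreover have "\<forall>x\<in>F. 0 \<le> w x" unfolding w_def using f(1) by (auto intro!: sum_nonneg)
  moreover have "sum w F = 1" using comb[of "\<lambda>_. 1"] f(2) by simp
  moreover have "tuple_point K f = (\<lambda>c. \<Sum>x\<in>F. w x * x c)" unfolding tuple_point_def using comb by auto
  ultimately have "convex_rep X F w (tuple_point K f)" unfolding convex_rep_def by blast
  then show ?thesis using convh_iff_convex_rep by blast
qed

lemma convh_in_tuple_point_image:
  assumes X0: "\<forall>x\<in>X. \<forall>j\<ge>k. x j = 0" and Xne: "X \<noteq> {}" and z: "z \<in> convh X"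
  shows "z \<in> tuple_point k ` simplex_tuples k X"
proof -
  obtain F w where F: "convex_rep X F w z" "card F \<le> Suc k"
    using caratheodory_convh[OF X0 z] by blast
  have fin: "finite F" and FX: "F \<subseteq> X" and w0: "\<forall>x\<in>F. 0 \<le> w x" and w1: "sum w F = 1"
    and zF: "z = (\<lambda>j. \<Sum>x\<in>F. w x * x j)" using F(1) unfolding convex_rep_def by auto
  obtain h where h: "bij_betw h {0..<card F} F" using ex_bij_betw_nat_finite[OF fin] by blast
  obtain x0 where x0: "x0 \<in> X" using Xne by blast
  \<comment> \<open>list the points of F, pad with weight-0 copies of x0 up to index k\<close>
  define f where "f j = (if j < card F then (w (h j), h j) else if j \<le> k then (0, x0) else (0, \<lambda>_. 0))"
    for j
  have hF: "h j \<in> F" if "j < card F" for j using h that unfolding bij_betw_def by auto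
  have wle: "w x \<le> 1" if "x \<in> F" for x
    using member_le_sum[of x F w] fin w0 w1 that by auto
  have comb: "(\<Sum>j\<le>k. fst (f j) * g (snd (f j))) = (\<Sum>x\<in>F. w x * g x)" for g :: "_ \<Rightarrow> real"
  proof -
    have "(\<Sum>j\<le>k. fst (f j) * g (snd (f j))) = (\<Sum>j\<in>{0..<card F}. fst (f j) * g (snd (f j)))"
      using F(2) unfolding f_def by (intro sum.mono_neutral_right) auto
    also have "\<dots> = (\<Sum>j\<in>{0..<card F}. w (h j) * g (h j))" unfolding f_def by (intro sum.cong) auto
    also have "\<dots> = (\<Sum>x\<in>F. w x * g x)" using sum.reindex_bij_betw[OF h, of "\<lambda>x. w x * g x"] by simp
    finally show ?thesis .
  qed
  have "\<forall>j\<le>k. f j \<in> {0..1} \<times> X" unfolding f_def using hF wle FX w0 x0 by auto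
  moreover have "\<forall>j>k. f j = (0, \<lambda>_. 0)" unfolding f_def using F(2) by auto
  moreover have "(\<Sum>j\<le>k. fst (f j)) = 1" using comb[of "\<lambda>_. 1"] w1 by simp
  ultimately have "f \<in> simplex_tuples k X" unfolding simplex_tuples_def by blast
  moreover have "tuple_point k f = z"
  proof
    fix c show "tuple_point k f c = z c" unfolding tuple_point_def zF using comb[of "\<lambda>x. x c"] by simp
  qed
  ultimately show ?thesis by blast
qed

lemma compact_convh:
  assumes X0: "\<forall>x\<in>X. \<forall>j\<ge>k. x j = 0" and Xne: "X \<noteq> {}" and Xc: "compact X"
  shows "compact (convh X)"
proof -
  have "convh X = tuple_point k ` simplex_tuples k X"
  proof
    show "convh X \<subseteq> tuple_point k ` simplex_tuples k X"
      using convh_in_tuple_point_image[OF X0 Xne] by blast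
    show "tuple_point k ` simplex_tuples k X \<subseteq> convh X"
      using tuple_point_in_convh by blast
  qed
  then show ?thesis
    using compact_continuous_image[OF continuous_on_subset[OF continuous_on_tuple_point]
        compact_simplex_tuples[OF Xc]] by auto
qed

section \<open>Affine minorants of convex functions\<close>

lemma convex_minorant_slopes:
  fixes f :: "(nat \<Rightarrow> real) \<Rightarrow> real"
  assumes cvx: "\<And>u w \<theta>. 0 \<le> \<theta> \<Longrightarrow> \<theta> \<le> 1 \<Longrightarrow>
      f (\<lambda>s. \<theta> * u s + (1 - \<theta>) * w s) \<le> \<theta> * f u + (1 - \<theta>) * f w"
    and minor: "\<And>u. (\<forall>s\<ge>k. u s = 0) \<Longrightarrow> f (\<lambda>_. 0) + dotp k g u \<le> f u"
    and y: "\<forall>s\<ge>k. y s = 0" and x: "\<forall>s\<ge>k. x s = 0" and a: "a > 0" and b: "b > 0"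
  shows "(f (\<lambda>_. 0) + dotp k g y - f (\<lambda>c. y c - a * e c)) / a
       \<le> (f (\<lambda>c. x c + b * e c) - f (\<lambda>_. 0) - dotp k g x) / b"
proof -
  define f0 where "f0 = f (\<lambda>_. 0)"
  define Ay where "Ay = f (\<lambda>c. y c - a * e c) - f0 - dotp k g y"
  define Bx where "Bx = f (\<lambda>c. x c + b * e c) - f0 - dotp k g x"
  \<comment> \<open>the two probe points average to a point without e-component\<close>
  define \<theta> where "\<theta> = b / (a + b)"
  have \<theta>: "0 \<le> \<theta>" "\<theta> \<le> 1" and c1: "(a + b) * \<theta> = b" and c2: "(a + b) * (1 - \<theta>) = a"
    using a b unfolding \<theta>_def by (auto simp: field_simps)
  define m where "m = (\<lambda>c. \<theta> * y c + (1 - \<theta>) * x c)"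
  have m_eq: "(\<lambda>c. \<theta> * (y c - a * e c) + (1 - \<theta>) * (x c + b * e c)) = m"
  proof
    fix c
    have "\<theta> * a = (1 - \<theta>) * b" using a b unfolding \<theta>_def by (simp add: field_simps)
    then have "\<theta> * (a * e c) = (1 - \<theta>) * (b * e c)" by (metis mult.assoc)
    moreover have "\<theta> * (y c - a * e c) + (1 - \<theta>) * (x c + b * e c)
        = \<theta> * y c + (1 - \<theta>) * x c + ((1 - \<theta>) * (b * e c) - \<theta> * (a * e c))"
      by (simp add: algebra_simps)
    ultimately show "\<theta> * (y c - a * e c) + (1 - \<theta>) * (x c + b * e c) = m c"
      unfolding m_def by linarith
  qed
  have "\<forall>s\<ge>k. m s = 0" using x y unfolding m_def by auto
  then have "f0 + dotp k g m \<le> f m" unfolding f0_def by (rule minor)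
  also have "f m \<le> \<theta> * f (\<lambda>c. y c - a * e c) + (1 - \<theta>) * f (\<lambda>c. x c + b * e c)"
    using cvx[OF \<theta>, of "\<lambda>c. y c - a * e c" "\<lambda>c. x c + b * e c"] m_eq by simp
  finally have "0 \<le> \<theta> * Ay + (1 - \<theta>) * Bx"
    unfolding m_def dotp_linear_comb Ay_def Bx_def by (simp add: algebra_simps)
  then have "0 \<le> (a + b) * (\<theta> * Ay + (1 - \<theta>) * Bx)" using a b by simp
  also have "(a + b) * (\<theta> * Ay + (1 - \<theta>) * Bx) = ((a + b) * \<theta>) * Ay + ((a + b) * (1 - \<theta>)) * Bx"
    by (simp only: distrib_left mult.assoc)
  finally have "0 \<le> b * Ay + a * Bx" unfolding c1 c2 .
  then have "0 \<le> (b * Ay + a * Bx) / (a * b)" using a b by simp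
  also have "(b * Ay + a * Bx) / (a * b) = Ay / a + Bx / b" using a b by (simp add: field_simps)
  finally have "- Ay / a \<le> Bx / b" by simp
  moreover have "(f0 + dotp k g y - f (\<lambda>c. y c - a * e c)) / a = - Ay / a"
    unfolding Ay_def by (simp add: minus_divide_left[symmetric])
  ultimately show ?thesis unfolding Bx_def f0_def by simp
qed

lemma convex_minorant_extend:
  fixes f :: "(nat \<Rightarrow> real) \<Rightarrow> real"
  assumes cvx: "\<And>u w \<theta>. 0 \<le> \<theta> \<Longrightarrow> \<theta> \<le> 1 \<Longrightarrow>
      f (\<lambda>s. \<theta> * u s + (1 - \<theta>) * w s) \<le> \<theta> * f u + (1 - \<theta>) * f w"
    and minor: "\<And>u. (\<forall>s\<ge>k. u s = 0) \<Longrightarrow> f (\<lambda>_. 0) + dotp k g u \<le> f u"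
  shows "\<exists>g'. \<forall>u. (\<forall>s\<ge>Suc k. u s = 0) \<longrightarrow> f (\<lambda>_. 0) + dotp (Suc k) g' u \<le> f u"
proof -
  define f0 where "f0 = f (\<lambda>_. 0)"
  define e where "e = (\<lambda>s::nat. if s = k then (1::real) else 0)"
  define lo where "lo y s' = (f0 + dotp k g y - f (\<lambda>c. y c - s' * e c)) / s'" for y s'
  define up where "up x t = (f (\<lambda>c. x c + t * e c) - f0 - dotp k g x) / t" for x t
  have slopes: "lo y s' \<le> up x t"
    if "\<forall>s\<ge>k. y s = 0" "\<forall>s\<ge>k. x s = 0" "s' > 0" "t > 0" for x y s' t
    unfolding lo_def up_def f0_def by (rule convex_minorant_slopes[OF cvx minor that])
  \<comment> \<open>the new coefficient separates the left slopes from the right slopes along e\<close>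
  define LS where "LS = {lo y s' | y s'. (\<forall>s\<ge>k. y s = 0) \<and> s' > 0}"
  define \<gamma> where "\<gamma> = Sup LS"
  have z0: "\<forall>s\<ge>k. (\<lambda>_::nat. 0::real) s = 0" by simp
  have "lo (\<lambda>_. 0) 1 \<in> LS" unfolding LS_def by (intro CollectI exI[of _ "\<lambda>_. 0"] exI[of _ "1::real"]) simp
  then have LSne: "LS \<noteq> {}" by auto
  have "\<forall>l\<in>LS. l \<le> up (\<lambda>_. 0) 1"
  proof
    fix l assume "l \<in> LS"
    then obtain y s' where "l = lo y s'" "\<forall>s\<ge>k. y s = 0" "s' > 0" unfolding LS_def by blast
    then show "l \<le> up (\<lambda>_. 0) 1" using slopes[of y "\<lambda>_. 0" s' 1] z0 by simp
  qed
  then have LSbdd: "bdd_above LS" unfolding bdd_above_def by blast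
  have \<gamma>_ge: "lo y s' \<le> \<gamma>" if "\<forall>s\<ge>k. y s = 0" "s' > 0" for y s'
    unfolding \<gamma>_def using that LSbdd by (intro cSup_upper) (auto simp: LS_def)
  have \<gamma>_le: "\<gamma> \<le> up x t" if "\<forall>s\<ge>k. x s = 0" "t > 0" for x t
    unfolding \<gamma>_def using that LSne by (intro cSup_least) (auto simp: LS_def intro: slopes)
  define g' where "g' = (\<lambda>s. if s = k then \<gamma> else g s)"
  show ?thesis
  proof (intro exI allI impI)
    fix u :: "nat \<Rightarrow> real" assume u: "\<forall>s\<ge>Suc k. u s = 0"
    define x where "x = u(k := 0)"
    define t where "t = u k"
    have xs: "\<forall>s\<ge>k. x s = 0" using u unfolding x_def by (auto simp: le_Suc_eq)
    have u_eq: "u = (\<lambda>c. x c + t * e c)" unfolding x_def t_def e_def by auto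
    have u_eq2: "u = (\<lambda>c. x c - (-t) * e c)" unfolding x_def t_def e_def by auto
    have lin_eq: "dotp (Suc k) g' u = dotp k g x + \<gamma> * t"
    proof -
      have "dotp (Suc k) g' u = (\<Sum>s<k. g' s * u s) + g' k * u k" unfolding dotp_def by simp
      also have "(\<Sum>s<k. g' s * u s) = dotp k g x" unfolding dotp_def g'_def x_def by (intro sum.cong) auto
      finally show ?thesis by (simp add: g'_def t_def)
    qed
    consider "t > 0" | "t < 0" | "t = 0" by linarith
    then show "f (\<lambda>_. 0) + dotp (Suc k) g' u \<le> f u"
    proof cases
      case 1
      have "\<gamma> * t \<le> up x t * t" using \<gamma>_le[OF xs 1] 1 by (simp add: mult_right_mono)
      also have "up x t * t = f u - f0 - dotp k g x" unfolding up_def using 1 u_eq by simp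
      finally show ?thesis using lin_eq unfolding f0_def by simp
    next
      case 2
      have "lo x (-t) * (-t) \<le> \<gamma> * (-t)" using \<gamma>_ge[OF xs, of "-t"] 2 by (simp add: mult_right_mono)
      moreover have "lo x (-t) * (-t) = f0 + dotp k g x - f u" unfolding lo_def using 2 u_eq2 by simp
      ultimately show ?thesis using lin_eq unfolding f0_def by simp
    next
      case 3
      then have "u = x" using u_eq by simp
      then show ?thesis using minor[OF xs] lin_eq 3 by simp
    qed
  qed
qed

lemma convex_affine_minorant:
  fixes f :: "(nat \<Rightarrow> real) \<Rightarrow> real"
  assumes cvx: "\<And>u w \<theta>. 0 \<le> \<theta> \<Longrightarrow> \<theta> \<le> 1 \<Longrightarrow>
      f (\<lambda>s. \<theta> * u s + (1 - \<theta>) * w s) \<le> \<theta> * f u + (1 - \<theta>) * f w"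
  shows "\<exists>g. \<forall>u. (\<forall>s\<ge>k. u s = 0) \<longrightarrow> f (\<lambda>_. 0) + dotp k g u \<le> f u"
proof (induction k)
  case 0
  show ?case
  proof (intro exI allI impI)
    fix u :: "nat \<Rightarrow> real" assume "\<forall>s\<ge>0. u s = 0"
    then have "u = (\<lambda>_. 0)" by auto
    then show "f (\<lambda>_. 0) + dotp 0 (\<lambda>_. 0) u \<le> f u" by (simp add: dotp_def)
  qed
next
  case (Suc k)
  then obtain g where "\<And>u. (\<forall>s\<ge>k. u s = 0) \<Longrightarrow> f (\<lambda>_. 0) + dotp k g u \<le> f u" by blast
  from convex_minorant_extend[OF cvx this] show ?case .
qed

section \<open>The penalized local problem\<close>

lemma convex_comb_le_Inf:
  fixes A B :: "real set"
  assumes "A \<noteq> {}" "B \<noteq> {}" "bdd_below A" "bdd_below B" "0 \<le> \<theta>" "\<theta> \<le> 1"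
    and H: "\<forall>a\<in>A. \<forall>b\<in>B. c \<le> \<theta> * a + (1 - \<theta>) * b"
  shows "c \<le> \<theta> * Inf A + (1 - \<theta>) * Inf B"
proof (rule ccontr)
  assume neg: "\<not> c \<le> \<theta> * Inf A + (1 - \<theta>) * Inf B"
  define \<epsilon> where "\<epsilon> = c - (\<theta> * Inf A + (1 - \<theta>) * Inf B)"
  have e: "\<epsilon> > 0" using neg unfolding \<epsilon>_def by simp
  obtain a where a: "a \<in> A" "a < Inf A + \<epsilon>/2"
    using cInf_less_iff[OF assms(1,3), of "Inf A + \<epsilon>/2"] e by auto
  obtain b where b: "b \<in> B" "b < Inf B + \<epsilon>/2"
    using cInf_less_iff[OF assms(2,4), of "Inf B + \<epsilon>/2"] e by auto
  have "\<theta> * a \<le> \<theta> * (Inf A + \<epsilon>/2)" using a assms(5) by (intro mult_left_mono) auto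
  moreover have "(1 - \<theta>) * b \<le> (1 - \<theta>) * (Inf B + \<epsilon>/2)" using b assms(6) by (intro mult_left_mono) auto
  moreover have "\<theta> * (Inf A + \<epsilon>/2) + (1 - \<theta>) * (Inf B + \<epsilon>/2) = \<theta> * Inf A + (1 - \<theta>) * Inf B + \<epsilon>/2"
    by (simp add: field_simps)
  ultimately have "\<theta> * a + (1 - \<theta>) * b < c" using e \<epsilon>_def by linarith
  then show False using H a(1) b(1) by fastforce
qed

definition pen_val :: "nat \<Rightarrow> (nat \<Rightarrow> real) \<Rightarrow> (nat \<Rightarrow> nat \<Rightarrow> real) \<Rightarrow> nat \<Rightarrow> (nat \<Rightarrow> real) set
     \<Rightarrow> real \<Rightarrow> (nat \<Rightarrow> real) \<Rightarrow> real" where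
  "pen_val k cv As S X M y = Inf {dotp k cv z + M * v | z v. p1_feas k As S X y z v}"

lemma p1_lagr_shift:
  "p1_lagr k cv As S M y' mu z v = p1_lagr k cv As S M y mu z v + (\<Sum>s<S. mu s * (y s - y' s))"
proof -
  have "(\<Sum>s<S. mu s * (dotp k (As s) z - y' s - v)) =
        (\<Sum>s<S. mu s * (dotp k (As s) z - y s - v) + mu s * (y s - y' s))"
    by (rule sum.cong) (simp_all add: algebra_simps)
  then show ?thesis unfolding p1_lagr_def by (simp add: sum.distrib)
qed

lemma p1_lagr_eq:
  "p1_lagr k cv As S M y mu z v =
     dotp k cv z + (\<Sum>s<S. mu s * (dotp k (As s) z - y s)) + (M - (\<Sum>s<S. mu s)) * v"
proof -
  have "(\<Sum>s<S. mu s * (dotp k (As s) z - y s - v)) =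
        (\<Sum>s<S. mu s * (dotp k (As s) z - y s) - mu s * v)"
    by (rule sum.cong) (simp_all add: algebra_simps)
  also have "\<dots> = (\<Sum>s<S. mu s * (dotp k (As s) z - y s)) - (\<Sum>s<S. mu s) * v"
    by (simp add: sum_subtractf sum_distrib_right)
  finally show ?thesis unfolding p1_lagr_def by (simp add: algebra_simps)
qed

lemma p1_lagr_le_cost:
  assumes "p1_feas k As S X y z v" "\<forall>s<S. 0 \<le> mu s"
  shows "p1_lagr k cv As S M y mu z v \<le> dotp k cv z + M * v"
proof -
  have "(\<Sum>s<S. mu s * (dotp k (As s) z - y s - v)) \<le> 0"
    using assms unfolding p1_feas_def by (intro sum_nonpos mult_nonneg_nonpos) auto
  then show ?thesis unfolding p1_lagr_def by simp
qed

lemma p1_dualfun_le_lagr: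
  assumes "z \<in> convh X" "0 \<le> v"
  shows "p1_dualfun k cv As S X M y mu \<le> ereal (p1_lagr k cv As S M y mu z v)"
  unfolding p1_dualfun_def using assms by (intro INF_lower2[of "(z, v)"]) auto

lemma p1_dualfun_shift:
  "p1_dualfun k cv As S X M y mu + ereal (\<Sum>s<S. mu s * (y s - y' s)) \<le> p1_dualfun k cv As S X M y' mu"
  unfolding p1_dualfun_def
proof (rule INF_greatest)
  fix zv assume zv: "zv \<in> convh X \<times> {0::real..}"
  have "(INF zv\<in>convh X \<times> {0..}. ereal (p1_lagr k cv As S M y mu (fst zv) (snd zv)))
        + ereal (\<Sum>s<S. mu s * (y s - y' s))
      \<le> ereal (p1_lagr k cv As S M y mu (fst zv) (snd zv)) + ereal (\<Sum>s<S. mu s * (y s - y' s))"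
    using zv by (intro add_right_mono INF_lower)
  also have "\<dots> = ereal (p1_lagr k cv As S M y' mu (fst zv) (snd zv))"
    unfolding p1_lagr_shift[of k cv As S M y' mu _ _ y] by simp
  finally show "(INF zv\<in>convh X \<times> {0..}. ereal (p1_lagr k cv As S M y mu (fst zv) (snd zv)))
      + ereal (\<Sum>s<S. mu s * (y s - y' s)) \<le> ereal (p1_lagr k cv As S M y' mu (fst zv) (snd zv))" .
qed

locale penalized_agent =
  fixes k :: nat and cv :: "nat \<Rightarrow> real" and As :: "nat \<Rightarrow> nat \<Rightarrow> real" and S :: nat
    and X :: "(nat \<Rightarrow> real) set" and M :: real
  assumes X0: "\<forall>x\<in>X. \<forall>j\<ge>k. x j = 0" and Xne: "X \<noteq> {}" and Xc: "compact X" and Mpos: "M > 0"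
begin

abbreviation "P \<equiv> pen_val k cv As S X M"
abbreviation "feas \<equiv> p1_feas k As S X"

lemma cost_bounded_below: "\<exists>m. \<forall>z\<in>convh X. m \<le> dotp k cv z"
proof -
  obtain x where "x \<in> X" "\<And>x'. x' \<in> X \<Longrightarrow> dotp k cv x \<le> dotp k cv x'"
    using dotp_attains_min[OF Xc Xne] by blast
  then show ?thesis using convh_dotp_lower_bound by blast
qed

lemma feas_exists: "\<exists>z v. feas y z v"
proof -
  obtain z0 where z0: "z0 \<in> X" using Xne by blast
  define v where "v = (\<Sum>s<S. \<bar>dotp k (As s) z0 - y s\<bar>)"
  have "\<forall>s<S. dotp k (As s) z0 \<le> y s + v"
  proof (intro allI impI)
    fix s assume "s < S"
    then have "\<bar>dotp k (As s) z0 - y s\<bar> \<le> v" unfolding v_def by (intro member_le_sum) auto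
    then show "dotp k (As s) z0 \<le> y s + v" by linarith
  qed
  moreover have "0 \<le> v" unfolding v_def by (intro sum_nonneg) auto
  ultimately show ?thesis using convh_inc[OF z0] unfolding p1_feas_def by blast
qed

lemma pen_val_set_bdd: "bdd_below {dotp k cv z + M * v | z v. feas y z v}"
proof -
  obtain m where "\<forall>z\<in>convh X. m \<le> dotp k cv z" using cost_bounded_below by blast
  then have "m \<le> dotp k cv z + M * v" if "feas y z v" for z v
    using that Mpos unfolding p1_feas_def by (smt (verit) mult_nonneg_nonneg)
  then show ?thesis unfolding bdd_below_def by blast
qed

lemma pen_val_set_ne: "{dotp k cv z + M * v | z v. feas y z v} \<noteq> {}"
  using feas_exists by blast

lemma pen_val_le: "feas y z v \<Longrightarrow> P y \<le> dotp k cv z + M * v"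
  unfolding pen_val_def by (rule cInf_lower[OF _ pen_val_set_bdd]) blast

lemma pen_val_greatest: "(\<And>z v. feas y z v \<Longrightarrow> a \<le> dotp k cv z + M * v) \<Longrightarrow> a \<le> P y"
  unfolding pen_val_def by (rule cInf_greatest[OF pen_val_set_ne]) blast

lemma pen_val_lipschitz: "P y' \<le> P y + M * (\<Sum>s<S. \<bar>y s - y' s\<bar>)"
proof -
  define d where "d = (\<Sum>s<S. \<bar>y s - y' s\<bar>)"
  have "P y' - M * d \<le> P y"
  proof (rule pen_val_greatest)
    fix z v assume f: "feas y z v"
    have "\<bar>y s - y' s\<bar> \<le> d" if "s < S" for s unfolding d_def using that by (intro member_le_sum) auto
    then have "feas y' z (v + d)"
      using f unfolding p1_feas_def d_def by (force intro: add_nonneg_nonneg sum_nonneg)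
    then have "P y' \<le> dotp k cv z + M * (v + d)" by (rule pen_val_le)
    then show "P y' - M * d \<le> dotp k cv z + M * v" by (simp add: algebra_simps)
  qed
  then show ?thesis unfolding d_def by simp
qed

lemma pen_val_antimono:
  assumes le: "\<And>s. s < S \<Longrightarrow> y s \<le> y' s"
  shows "P y' \<le> P y"
proof (rule pen_val_greatest)
  fix z v assume "feas y z v"
  then have "feas y' z v" using le unfolding p1_feas_def by (meson order_trans add_right_mono)
  then show "P y' \<le> dotp k cv z + M * v" by (rule pen_val_le)
qed

lemma pen_val_convex:
  assumes "0 \<le> \<theta>" "\<theta> \<le> 1"
  shows "P (\<lambda>s. \<theta> * y1 s + (1 - \<theta>) * y2 s) \<le> \<theta> * P y1 + (1 - \<theta>) * P y2"
  unfolding pen_val_def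
proof (rule convex_comb_le_Inf[OF pen_val_set_ne pen_val_set_ne pen_val_set_bdd pen_val_set_bdd assms],
    intro ballI)
  fix a b assume "a \<in> {dotp k cv z + M * v |z v. feas y1 z v}" "b \<in> {dotp k cv z + M * v |z v. feas y2 z v}"
  then obtain z1 v1 z2 v2 where a: "a = dotp k cv z1 + M * v1" "feas y1 z1 v1"
    and b: "b = dotp k cv z2 + M * v2" "feas y2 z2 v2" by blast
  define z where "z = (\<lambda>j. \<theta> * z1 j + (1 - \<theta>) * z2 j)"
  define v where "v = \<theta> * v1 + (1 - \<theta>) * v2"
  have "feas (\<lambda>s. \<theta> * y1 s + (1 - \<theta>) * y2 s) z v" unfolding p1_feas_def
  proof (intro conjI allI impI)
    show "z \<in> convh X" unfolding z_def using a b assms by (intro convh_convex_comb) (auto simp: p1_feas_def)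
    show "0 \<le> v" unfolding v_def using a b assms by (auto simp: p1_feas_def intro!: add_nonneg_nonneg)
  next
    fix s assume s: "s < S"
    have "\<theta> * dotp k (As s) z1 \<le> \<theta> * (y1 s + v1)"
      using a(2) s assms by (intro mult_left_mono) (auto simp: p1_feas_def)
    moreover have "(1 - \<theta>) * dotp k (As s) z2 \<le> (1 - \<theta>) * (y2 s + v2)"
      using b(2) s assms by (intro mult_left_mono) (auto simp: p1_feas_def)
    ultimately show "dotp k (As s) z \<le> \<theta> * y1 s + (1 - \<theta>) * y2 s + v"
      unfolding z_def v_def dotp_linear_comb by (simp add: algebra_simps)
  qed
  then have "P (\<lambda>s. \<theta> * y1 s + (1 - \<theta>) * y2 s) \<le> dotp k cv z + M * v" by (rule pen_val_le)
  also have "dotp k cv z + M * v = \<theta> * a + (1 - \<theta>) * b"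
    unfolding a b z_def v_def dotp_linear_comb by (simp add: algebra_simps)
  finally show "Inf {dotp k cv z + M * v |z v. feas (\<lambda>s. \<theta> * y1 s + (1 - \<theta>) * y2 s) z v}
      \<le> \<theta> * a + (1 - \<theta>) * b" unfolding pen_val_def .
qed


lemma pen_val_attained: "\<exists>z v. feas y z v \<and> dotp k cv z + M * v = P y"
proof -
  obtain m where m: "\<forall>z\<in>convh X. m \<le> dotp k cv z" using cost_bounded_below by blast
  obtain z0 v0 where f0: "feas y z0 v0" using feas_exists by blast
  \<comment> \<open>violations beyond Vm cost more than the feasible point (z0, v0)\<close>
  define Vm where "Vm = v0 + (dotp k cv z0 - m) / M"
  have v0Vm: "v0 \<le> Vm" unfolding Vm_def using m f0 Mpos unfolding p1_feas_def by simp
  define Q where "Q = (convh X \<times> {0..Vm}) \<inter>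
    (\<Inter>s\<in>{..<S}. {p. dotp k (As s) (fst p) \<le> y s + snd p})"
  have inQ: "(z, v) \<in> Q \<longleftrightarrow> feas y z v \<and> v \<le> Vm" for z v
    unfolding Q_def p1_feas_def by auto
  have cont_fst: "continuous_on UNIV (\<lambda>p::(nat \<Rightarrow> real) \<times> real. dotp k u (fst p))" for u
    by (rule continuous_on_compose2[OF continuous_on_dotp continuous_on_fst[OF continuous_on_id]]) auto
  have cQ: "compact Q" unfolding Q_def
  proof (rule compact_Int_closed)
    show "compact (convh X \<times> {0..Vm})" using compact_convh[OF X0 Xne Xc] by (intro compact_Times) auto
    show "closed (\<Inter>s\<in>{..<S}. {p. dotp k (As s) (fst p) \<le> y s + snd p})"
      by (intro closed_INT ballI closed_Collect_le cont_fst continuous_intros)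
  qed
  have Qne: "Q \<noteq> {}" using inQ f0 v0Vm by blast
  have cobj: "continuous_on Q (\<lambda>p. dotp k cv (fst p) + M * snd p)"
    using continuous_on_subset[OF cont_fst[of cv] subset_UNIV]
    by (intro continuous_on_add continuous_on_mult continuous_on_const continuous_on_snd continuous_on_id)
  obtain zb vb where fb: "feas y zb vb"
    and min: "\<And>z v. (z, v) \<in> Q \<Longrightarrow> dotp k cv zb + M * vb \<le> dotp k cv z + M * v"
  proof -
    obtain p where "p \<in> Q" "\<forall>q\<in>Q. dotp k cv (fst p) + M * snd p \<le> dotp k cv (fst q) + M * snd q"
      using continuous_attains_inf[OF cQ Qne cobj] by blast
    then show ?thesis using that[of "fst p" "snd p"] inQ[of "fst p" "snd p"] by force
  qed
  have "dotp k cv zb + M * vb \<le> P y"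
  proof (rule pen_val_greatest)
    fix z v assume f: "feas y z v"
    show "dotp k cv zb + M * vb \<le> dotp k cv z + M * v"
    proof (cases "v \<le> Vm")
      case True
      then show ?thesis using min inQ f by blast
    next
      case False
      have "dotp k cv zb + M * vb \<le> dotp k cv z0 + M * v0" using min inQ f0 v0Vm by blast
      also have "\<dots> = m + M * Vm" unfolding Vm_def using Mpos by (simp add: field_simps)
      also have "\<dots> \<le> dotp k cv z + M * v"
        using m f mult_left_mono[of Vm v M] False Mpos unfolding p1_feas_def
        by (simp add: add_mono)
      finally show ?thesis .
    qed
  qed
  then have "dotp k cv zb + M * vb = P y" using pen_val_le[OF fb] by simp
  then show ?thesis using fb by blast
qed

text \<open>Zero duality gap: an affine minorant of the convex function u \<mapsto> P (y + u) at 0 yields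
multipliers whose dual value is at least P y.\<close>
lemma pen_val_le_some_dualfun: "\<exists>mu'. (\<forall>s<S. 0 \<le> mu' s) \<and> ereal (P y) \<le> p1_dualfun k cv As S X M y mu'"
proof -
  define \<psi> where "\<psi> u = P (\<lambda>s. y s + u s)" for u
  have "\<psi> (\<lambda>s. \<theta> * u s + (1 - \<theta>) * w s) \<le> \<theta> * \<psi> u + (1 - \<theta>) * \<psi> w"
    if "0 \<le> \<theta>" "\<theta> \<le> 1" for u w \<theta>
  proof -
    have "(\<lambda>s. y s + (\<theta> * u s + (1 - \<theta>) * w s)) = (\<lambda>s. \<theta> * (y s + u s) + (1 - \<theta>) * (y s + w s))"
      by (simp add: algebra_simps)
    then show ?thesis unfolding \<psi>_def using pen_val_convex[OF that] by simp
  qed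
  then obtain g where g: "\<And>u. (\<forall>s\<ge>S. u s = 0) \<Longrightarrow> \<psi> (\<lambda>_. 0) + dotp S g u \<le> \<psi> u"
    using convex_affine_minorant[of \<psi> S] by blast
  have \<psi>0: "\<psi> (\<lambda>_. 0) = P y" unfolding \<psi>_def by simp
  have "g s \<le> 0" if s: "s < S" for s
  proof -
    define u where "u = (\<lambda>j. if j = s then 1 else (0::real))"
    have "dotp S g u = g s" unfolding dotp_def u_def using s by (simp add: if_distrib cong: if_cong)
    moreover have "\<psi> u \<le> \<psi> (\<lambda>_. 0)" unfolding \<psi>_def by (rule pen_val_antimono) (simp add: u_def)
    moreover have "\<forall>j\<ge>S. u j = 0" unfolding u_def using s by auto
    ultimately show ?thesis using g[of u] by simp
  qed
  moreover have "ereal (P y) \<le> p1_dualfun k cv As S X M y (\<lambda>s. - g s)"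
    unfolding p1_dualfun_def
  proof (rule INF_greatest)
    fix zv assume "zv \<in> convh X \<times> {0::real..}"
    then obtain z v where zv: "zv = (z, v)" "z \<in> convh X" "0 \<le> v" by auto
    define u where "u s = (if s < S then dotp k (As s) z - y s - v else 0)" for s
    have "feas (\<lambda>s. y s + u s) z v" unfolding p1_feas_def u_def using zv by auto
    then have "\<psi> u \<le> dotp k cv z + M * v" unfolding \<psi>_def by (rule pen_val_le)
    moreover have "\<psi> (\<lambda>_. 0) + dotp S g u \<le> \<psi> u" using g[of u] unfolding u_def by simp
    moreover have "dotp S g u = - (\<Sum>s<S. - g s * (dotp k (As s) z - y s - v))"
      unfolding dotp_def u_def by (simp add: sum_negf[symmetric])
    ultimately have "P y \<le> p1_lagr k cv As S M y (\<lambda>s. - g s) z v" unfolding p1_lagr_def \<psi>0 by simp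
    then show "ereal (P y) \<le> ereal (p1_lagr k cv As S M y (\<lambda>s. - g s) (fst zv) (snd zv))"
      using zv by simp
  qed
  ultimately show ?thesis by (intro exI[of _ "\<lambda>s. - g s"]) auto
qed

lemma pen_val_le_dual_opt:
  assumes "p1_pd_opt k cv As S X M y z v mu"
  shows "ereal (P y) \<le> p1_dualfun k cv As S X M y mu"
  using pen_val_le_some_dualfun assms unfolding p1_pd_opt_def by (meson order_trans)

lemma dual_opt_subgradient:
  assumes pd: "p1_pd_opt k cv As S X M y z v mu"
  shows "P y - (\<Sum>s<S. mu s * (y' s - y s)) \<le> P y'"
proof -
  define c where "c = (\<Sum>s<S. mu s * (y s - y' s))"
  have mu0: "\<forall>s<S. 0 \<le> mu s" using pd unfolding p1_pd_opt_def by blast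
  have "P y + c \<le> P y'"
  proof (rule pen_val_greatest)
    fix z' v' assume f: "feas y' z' v'"
    have "ereal (P y) + ereal c \<le> p1_dualfun k cv As S X M y mu + ereal c"
      using pen_val_le_dual_opt[OF pd] by (rule add_right_mono)
    also have "\<dots> \<le> p1_dualfun k cv As S X M y' mu" unfolding c_def by (rule p1_dualfun_shift)
    also have "\<dots> \<le> ereal (p1_lagr k cv As S M y' mu z' v')"
      using f unfolding p1_feas_def by (intro p1_dualfun_le_lagr) auto
    also have "\<dots> \<le> ereal (dotp k cv z' + M * v')" using p1_lagr_le_cost[OF f mu0] by simp
    finally show "P y + c \<le> dotp k cv z' + M * v'" by simp
  qed
  moreover have "P y - (\<Sum>s<S. mu s * (y' s - y s)) = P y + c"
    unfolding c_def by (simp add: algebra_simps sum_subtractf)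
  ultimately show ?thesis by simp
qed

lemma dual_opt_sum_le:
  assumes pd: "p1_pd_opt k cv As S X M y z v mu"
  shows "(\<Sum>s<S. mu s) \<le> M"
proof (rule ccontr)
  assume neg: "\<not> (\<Sum>s<S. mu s) \<le> M"
  obtain z0 where z0: "z0 \<in> X" using Xne by blast
  \<comment> \<open>otherwise the dual function is -\<infinity>: let the violation v grow\<close>
  define K0 where "K0 = dotp k cv z0 + (\<Sum>s<S. mu s * (dotp k (As s) z0 - y s))"
  define v' where "v' = (\<bar>K0\<bar> + \<bar>P y\<bar> + 1) / ((\<Sum>s<S. mu s) - M)"
  have v'0: "0 \<le> v'" unfolding v'_def using neg by simp
  have "ereal (P y) \<le> ereal (p1_lagr k cv As S M y mu z0 v')"
    using pen_val_le_dual_opt[OF pd] p1_dualfun_le_lagr[OF convh_inc[OF z0] v'0] by (rule order.trans)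
  then have "P y \<le> K0 + (M - (\<Sum>s<S. mu s)) * v'" unfolding p1_lagr_eq K0_def by simp
  also have "(M - (\<Sum>s<S. mu s)) * v' = - (\<bar>K0\<bar> + \<bar>P y\<bar> + 1)"
    unfolding v'_def using neg by (simp add: field_simps)
  finally show False by linarith
qed

lemma dual_opt_abs_le:
  assumes pd: "p1_pd_opt k cv As S X M y z v mu" and s: "s < S"
  shows "\<bar>mu s\<bar> \<le> M"
proof -
  have mu0: "\<forall>s<S. 0 \<le> mu s" using pd unfolding p1_pd_opt_def by blast
  then have "mu s \<le> (\<Sum>s<S. mu s)" using s by (intro member_le_sum) auto
  then show ?thesis using mu0 s dual_opt_sum_le[OF pd] by simp
qed

end

section \<open>Skew flows and the dual subgradient iteration\<close>

definition sym_nbrs :: "nat \<Rightarrow> (nat \<Rightarrow> nat set) \<Rightarrow> bool" where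
  "sym_nbrs N Nb \<longleftrightarrow> (\<forall>i<N. Nb i \<subseteq> {..<N} \<and> (\<forall>j\<in>Nb i. i \<in> Nb j))"

definition skew :: "(nat \<Rightarrow> nat \<Rightarrow> real) \<Rightarrow> bool" where
  "skew L \<longleftrightarrow> (\<forall>i j. L i j = - L j i)"

lemma conn_undirected_sym_nbrs: "conn_undirected N Nb \<Longrightarrow> sym_nbrs N Nb"
  unfolding conn_undirected_def sym_nbrs_def by blast

lemma sym_nbrs_finite: "sym_nbrs N Nb \<Longrightarrow> i < N \<Longrightarrow> finite (Nb i)"
  unfolding sym_nbrs_def by (meson finite_lessThan finite_subset)

lemma skew_add:
  assumes "skew L" "skew L'"
  shows "skew (\<lambda>i j. L i j + L' i j)"
  unfolding skew_def
proof (intro allI)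
  fix i j
  have "L i j = - L j i" "L' i j = - L' j i" using assms unfolding skew_def by blast+
  then show "L i j + L' i j = - (L j i + L' j i)" by linarith
qed

lemma skew_sum:
  assumes "\<And>a. a \<in> A \<Longrightarrow> skew (Lf a)"
  shows "skew (\<lambda>i j. \<Sum>a\<in>A. Lf a i j)"
  unfolding skew_def
proof (intro allI)
  fix i j
  have "(\<Sum>a\<in>A. Lf a i j) = (\<Sum>a\<in>A. - Lf a j i)"
    using assms unfolding skew_def by (intro sum.cong) blast+
  also have "\<dots> = - (\<Sum>a\<in>A. Lf a j i)" by (rule sum_negf)
  finally show "(\<Sum>a\<in>A. Lf a i j) = - (\<Sum>a\<in>A. Lf a j i)" .
qed

lemma skew_edge_flow:
  fixes w :: real
  assumes nb: "sym_nbrs N Nb" and b: "b < N" and c: "c \<in> Nb b" and bc: "b \<noteq> c"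
  defines "L \<equiv> \<lambda>i j. if i = b \<and> j = c then w else if i = c \<and> j = b then - w else 0"
  shows "skew L"
    and "i < N \<Longrightarrow> (\<Sum>j\<in>Nb i. L i j) = (if i = b then w else 0) - (if i = c then w else 0)"
proof -
  show "skew L" unfolding skew_def L_def using bc by auto
  assume i: "i < N"
  have fin: "finite (Nb i)" using sym_nbrs_finite[OF nb i] .
  have cb: "b \<in> Nb c" using nb b c unfolding sym_nbrs_def by auto
  consider "i = b" | "i = c" | "i \<noteq> b \<and> i \<noteq> c" by blast
  then show "(\<Sum>j\<in>Nb i. L i j) = (if i = b then w else 0) - (if i = c then w else 0)"
  proof cases
    case 1
    then have "(\<Sum>j\<in>Nb i. L i j) = (\<Sum>j\<in>Nb i. if j = c then w else 0)"
      unfolding L_def using bc by (intro sum.cong) auto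
    also have "\<dots> = w" using fin c 1 by (simp add: sum.delta')
    finally show ?thesis using 1 bc by simp
  next
    case 2
    then have "(\<Sum>j\<in>Nb i. L i j) = (\<Sum>j\<in>Nb i. if j = b then - w else 0)"
      unfolding L_def using bc by (intro sum.cong) auto
    also have "\<dots> = - w" using fin cb 2 by (simp add: sum.delta')
    finally show ?thesis using 2 bc by simp
  next
    case 3
    then have "(\<Sum>j\<in>Nb i. L i j) = 0" unfolding L_def by (intro sum.neutral) auto
    then show ?thesis using 3 by simp
  qed
qed

lemma skew_flow_along_path:
  assumes nb: "sym_nbrs N Nb"
    and path: "(a, b) \<in> {(a, b). a < N \<and> b \<in> Nb a}\<^sup>*"
  shows "\<exists>L. skew L \<and> (\<forall>i<N. (\<Sum>j\<in>Nb i. L i j) = (if i = a then w else 0) - (if i = b then w else 0))"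
  using path
proof (induction rule: rtrancl_induct)
  case base
  show ?case by (rule exI[of _ "\<lambda>_ _. 0"]) (simp add: skew_def)
next
  case (step b' c)
  then obtain L where L: "skew L" "\<forall>i<N. (\<Sum>j\<in>Nb i. L i j) = (if i = a then w else 0) - (if i = b' then w else 0)"
    by blast
  show ?case
  proof (cases "b' = c")
    case True then show ?thesis using L by (metis diff_self)
  next
    case False
    from step.hyps(2) have b': "b' < N" and c: "c \<in> Nb b'" by auto
    define E where "E = (\<lambda>i j. if i = b' \<and> j = c then w else if i = c \<and> j = b' then - w else 0)"
    have "skew (\<lambda>i j. L i j + E i j)"
      using skew_add[OF L(1) skew_edge_flow(1)[OF nb b' c False]] unfolding E_def .
    moreover have "\<forall>i<N. (\<Sum>j\<in>Nb i. L i j + E i j) = (if i = a then w else 0) - (if i = c then w else 0)"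
      using L(2) skew_edge_flow(2)[OF nb b' c False, of _ w] unfolding E_def by (simp add: sum.distrib)
    ultimately show ?thesis by blast
  qed
qed

lemma skew_flow_exists:
  assumes conn: "conn_undirected N Nb" and sum0: "(\<Sum>i<N. D i) = 0"
  shows "\<exists>L. skew L \<and> (\<forall>i<N. (\<Sum>j\<in>Nb i. L i j) = D i)"
proof (cases "N = 0")
  case True then show ?thesis by (intro exI[of _ "\<lambda>_ _. 0"]) (simp add: skew_def)
next
  case False
  \<comment> \<open>route the demand of every vertex a to vertex 0 and superpose the path flows\<close>
  have "\<forall>a. \<exists>L. a < N \<longrightarrow> skew L \<and>
      (\<forall>i<N. (\<Sum>j\<in>Nb i. L i j) = (if i = a then D a else 0) - (if i = 0 then D a else 0))"
  proof
    fix a show "\<exists>L. a < N \<longrightarrow> skew L \<and>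
        (\<forall>i<N. (\<Sum>j\<in>Nb i. L i j) = (if i = a then D a else 0) - (if i = 0 then D a else 0))"
    proof (cases "a < N")
      case True
      then have "(a, 0) \<in> {(a, b). a < N \<and> b \<in> Nb a}\<^sup>*" using conn False unfolding conn_undirected_def by auto
      from skew_flow_along_path[OF conn_undirected_sym_nbrs[OF conn] this, of "D a"] show ?thesis by simp
    qed simp
  qed
  then have "\<exists>Lf. \<forall>a. a < N \<longrightarrow> skew (Lf a) \<and>
      (\<forall>i<N. (\<Sum>j\<in>Nb i. Lf a i j) = (if i = a then D a else 0) - (if i = 0 then D a else 0))"
    by (rule choice)
  then obtain Lf where Lf: "\<And>a. a < N \<Longrightarrow> skew (Lf a)"
    "\<And>a i. a < N \<Longrightarrow> i < N \<Longrightarrow> (\<Sum>j\<in>Nb i. Lf a i j) = (if i = a then D a else 0) - (if i = 0 then D a else 0)"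
    by blast
  have "(\<Sum>j\<in>Nb i. \<Sum>a<N. Lf a i j) = D i" if i: "i < N" for i
  proof -
    have "(\<Sum>j\<in>Nb i. \<Sum>a<N. Lf a i j) = (\<Sum>a<N. \<Sum>j\<in>Nb i. Lf a i j)" by (rule sum.swap)
    also have "\<dots> = (\<Sum>a<N. (if i = a then D a else 0) - (if i = 0 then D a else 0))"
      using Lf(2) i by (intro sum.cong) auto
    also have "\<dots> = D i - (if i = 0 then (\<Sum>a<N. D a) else 0)"
      using i by (simp add: sum_subtractf sum.delta)
    finally show ?thesis using sum0 by simp
  qed
  moreover have "skew (\<lambda>i j. \<Sum>a<N. Lf a i j)" using Lf(1) by (intro skew_sum) simp
  ultimately show ?thesis by blast
qed

lemma sum_edges_swap:
  fixes N :: nat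
  assumes nb: "sym_nbrs N Nb"
  shows "(\<Sum>i<N. \<Sum>j\<in>Nb i. h i j) = (\<Sum>i<N. \<Sum>j\<in>Nb i. (h j i :: real))"
proof -
  have fin: "\<forall>i\<in>{..<N}. finite (Nb i)" using sym_nbrs_finite[OF nb] by blast
  define E where "E = Sigma {..<N} Nb"
  have "(\<Sum>i<N. \<Sum>j\<in>Nb i. h i j) = (\<Sum>p\<in>E. h (fst p) (snd p))"
    unfolding E_def using fin by (simp add: sum.Sigma split_def)
  also have "\<dots> = (\<Sum>p\<in>E. h (snd p) (fst p))"
  proof -
    have sw: "prod.swap p \<in> E" if "p \<in> E" for p
    proof -
      obtain a b where ab: "p = (a, b)" "a < N" "b \<in> Nb a" using \<open>p \<in> E\<close> unfolding E_def by auto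
      have "Nb a \<subseteq> {..<N}" "a \<in> Nb b" using nb ab unfolding sym_nbrs_def by auto
      then have "b < N" using ab(3) by auto
      then show ?thesis using ab \<open>a \<in> Nb b\<close> unfolding E_def by auto
    qed
    show ?thesis
      by (rule sum.reindex_bij_witness[of _ prod.swap prod.swap]) (auto simp: sw)
  qed
  also have "\<dots> = (\<Sum>i<N. \<Sum>j\<in>Nb i. h j i)"
    unfolding E_def using fin by (simp add: sum.Sigma split_def)
  finally show ?thesis .
qed

lemma weighted_excess_limit_le:
  fixes \<alpha> F :: "nat \<Rightarrow> real"
  assumes \<alpha>0: "\<And>t. 0 \<le> \<alpha> t" and div: "filterlim (\<lambda>T. \<Sum>t<T. \<alpha> t) at_top sequentially"
    and lower: "\<And>t. J \<le> F t" and lim: "F \<longlonglongrightarrow> Finf"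
    and bnd: "\<And>T. (\<Sum>t<T. \<alpha> t * (F t - J)) \<le> B"
  shows "Finf \<le> J"
proof (rule ccontr)
  assume "\<not> Finf \<le> J"
  define \<eta> where "\<eta> = (Finf - J) / 2"
  have \<eta>: "\<eta> > 0" using \<open>\<not> Finf \<le> J\<close> unfolding \<eta>_def by simp
  have "eventually (\<lambda>t. J + \<eta> < F t) sequentially"
    using lim by (rule order_tendstoD) (use \<eta> \<eta>_def in simp)
  then obtain T0 where T0: "\<And>t. t \<ge> T0 \<Longrightarrow> J + \<eta> < F t" unfolding eventually_sequentially by blast
  have "eventually (\<lambda>T. B / \<eta> + (\<Sum>t<T0. \<alpha> t) + 1 \<le> (\<Sum>t<T. \<alpha> t)) sequentially"
    using div unfolding filterlim_at_top by blast
  then obtain T1 where T1: "\<And>T. T \<ge> T1 \<Longrightarrow> B / \<eta> + (\<Sum>t<T0. \<alpha> t) + 1 \<le> (\<Sum>t<T. \<alpha> t)"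
    unfolding eventually_sequentially by blast
  define T where "T = max T0 T1"
  have split: "(\<Sum>t<T. g t) = (\<Sum>t<T0. g t) + (\<Sum>t\<in>{T0..<T}. g t)" for g :: "nat \<Rightarrow> real"
  proof -
    have "{..<T} = {..<T0} \<union> {T0..<T}" unfolding T_def by auto
    then have "(\<Sum>t<T. g t) = (\<Sum>t\<in>{..<T0} \<union> {T0..<T}. g t)" by simp
    also have "\<dots> = (\<Sum>t<T0. g t) + (\<Sum>t\<in>{T0..<T}. g t)" by (rule sum.union_disjoint) auto
    finally show ?thesis .
  qed
  have "\<eta> * ((\<Sum>t<T. \<alpha> t) - (\<Sum>t<T0. \<alpha> t)) = (\<Sum>t\<in>{T0..<T}. \<alpha> t * \<eta>)"
    using split[of \<alpha>] by (simp add: sum_distrib_right[symmetric])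
  also have "(\<Sum>t\<in>{T0..<T}. \<alpha> t * \<eta>) \<le> (\<Sum>t\<in>{T0..<T}. \<alpha> t * (F t - J))"
    using T0 \<alpha>0 by (intro sum_mono mult_left_mono) (auto simp: less_imp_le algebra_simps)
  also have "\<dots> \<le> (\<Sum>t<T. \<alpha> t * (F t - J))"
    using split[of "\<lambda>t. \<alpha> t * (F t - J)"] \<alpha>0 lower
    by (simp add: sum_nonneg mult_nonneg_nonneg)
  also have "\<dots> \<le> B" by (rule bnd)
  finally have "\<eta> * ((\<Sum>t<T. \<alpha> t) - (\<Sum>t<T0. \<alpha> t)) \<le> B" .
  moreover have "\<eta> * (B / \<eta> + 1) \<le> \<eta> * ((\<Sum>t<T. \<alpha> t) - (\<Sum>t<T0. \<alpha> t))"
    using T1[of T] \<eta> unfolding T_def by (intro mult_left_mono) auto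
  moreover have "\<eta> * (B / \<eta> + 1) = B + \<eta>" using \<eta> by (simp add: field_simps)
  ultimately show False using \<eta> by linarith
qed

lemma skew_edge_potential:
  fixes y mu :: "nat \<Rightarrow> nat \<Rightarrow> nat \<Rightarrow> real" and ystar :: "nat \<Rightarrow> nat \<Rightarrow> real"
  assumes conn: "conn_undirected N Nb"
    and upd: "\<And>t i s. i < N \<Longrightarrow> s < S \<Longrightarrow> y (Suc t) i s = y t i s + \<alpha> t * (\<Sum>j\<in>Nb i. mu t i s - mu t j s)"
    and ystar_sum: "\<And>s. s < S \<Longrightarrow> (\<Sum>i<N. ystar i s) = (\<Sum>i<N. y 0 i s)"
  obtains \<Delta> where "\<And>t i s. i < N \<Longrightarrow> s < S \<Longrightarrow> (\<Sum>j\<in>Nb i. \<Delta> t i j s) = y t i s - ystar i s"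
    and "\<And>t i j s. s < S \<Longrightarrow> \<Delta> t j i s = - \<Delta> t i j s"
    and "\<And>t i j s. \<Delta> (Suc t) i j s = \<Delta> t i j s + \<alpha> t * (mu t i s - mu t j s)"
proof -
  \<comment> \<open>\<Delta> is the accumulated edge flow minus a fixed skew flow that routes y 0 to ystar\<close>
  define \<Lambda> where "\<Lambda> t i j s = (\<Sum>\<tau><t. \<alpha> \<tau> * (mu \<tau> i s - mu \<tau> j s))" for t i j s
  have ylam: "y t i s = y 0 i s + (\<Sum>j\<in>Nb i. \<Lambda> t i j s)" if "i < N" "s < S" for t i s
  proof (induction t)
    case 0 then show ?case unfolding \<Lambda>_def by simp
  next
    case (Suc t)
    have "(\<Sum>j\<in>Nb i. \<Lambda> (Suc t) i j s) = (\<Sum>j\<in>Nb i. \<Lambda> t i j s) + \<alpha> t * (\<Sum>j\<in>Nb i. mu t i s - mu t j s)"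
      unfolding \<Lambda>_def by (simp add: sum.distrib sum_distrib_left)
    then show ?case using upd[OF that, of t] Suc by simp
  qed
  have "\<forall>s. \<exists>L. s < S \<longrightarrow> skew L \<and> (\<forall>i<N. (\<Sum>j\<in>Nb i. L i j) = ystar i s - y 0 i s)"
  proof
    fix s show "\<exists>L. s < S \<longrightarrow> skew L \<and> (\<forall>i<N. (\<Sum>j\<in>Nb i. L i j) = ystar i s - y 0 i s)"
    proof (cases "s < S")
      case True
      have "(\<Sum>i<N. ystar i s - y 0 i s) = 0" using ystar_sum[OF True] by (simp add: sum_subtractf)
      from skew_flow_exists[OF conn this] show ?thesis by blast
    qed simp
  qed
  then have "\<exists>Ls. \<forall>s. s < S \<longrightarrow> skew (Ls s) \<and> (\<forall>i<N. (\<Sum>j\<in>Nb i. Ls s i j) = ystar i s - y 0 i s)"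
    by (rule choice)
  then obtain Ls where Ls: "\<And>s. s < S \<Longrightarrow> skew (Ls s)"
    "\<And>s i. s < S \<Longrightarrow> i < N \<Longrightarrow> (\<Sum>j\<in>Nb i. Ls s i j) = ystar i s - y 0 i s"
    by blast
  show ?thesis
  proof (rule that[of "\<lambda>t i j s. \<Lambda> t i j s - Ls s i j"])
    fix t i s assume i: "i < N" and s: "s < S"
    have "(\<Sum>j\<in>Nb i. \<Lambda> t i j s - Ls s i j) = (\<Sum>j\<in>Nb i. \<Lambda> t i j s) - (\<Sum>j\<in>Nb i. Ls s i j)"
      by (rule sum_subtractf)
    then show "(\<Sum>j\<in>Nb i. \<Lambda> t i j s - Ls s i j) = y t i s - ystar i s"
      using ylam[OF i s, of t] Ls(2)[OF s i] by linarith
  next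
    fix t i j s assume "s < S"
    then have "Ls s j i = - Ls s i j" using Ls(1) unfolding skew_def by blast
    moreover have "\<Lambda> t j i s = - \<Lambda> t i j s" unfolding \<Lambda>_def by (simp add: sum_negf[symmetric] algebra_simps)
    ultimately show "\<Lambda> t j i s - Ls s j i = - (\<Lambda> t i j s - Ls s i j)" by simp
  next
    fix t i j s
    show "\<Lambda> (Suc t) i j s - Ls s i j = \<Lambda> t i j s - Ls s i j + \<alpha> t * (mu t i s - mu t j s)"
      unfolding \<Lambda>_def by simp
  qed
qed

lemma lyapunov_descent:
  fixes y mu :: "nat \<Rightarrow> nat \<Rightarrow> nat \<Rightarrow> real" and ystar :: "nat \<Rightarrow> nat \<Rightarrow> real"
    and Pf :: "nat \<Rightarrow> (nat \<Rightarrow> real) \<Rightarrow> real" and \<Delta> :: "nat \<Rightarrow> nat \<Rightarrow> nat \<Rightarrow> nat \<Rightarrow> real"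
  assumes nb: "sym_nbrs N Nb" and \<alpha>0: "0 \<le> \<alpha> t"
    and subg: "\<And>i y'. i < N \<Longrightarrow> Pf i (y t i) - (\<Sum>s<S. mu t i s * (y' s - y t i s)) \<le> Pf i y'"
    and mub: "\<And>i s. i < N \<Longrightarrow> s < S \<Longrightarrow> \<bar>mu t i s\<bar> \<le> Mb"
    and ystar_val: "(\<Sum>i<N. Pf i (ystar i)) \<le> J"
    and \<Delta>sum: "\<And>i s. i < N \<Longrightarrow> s < S \<Longrightarrow> (\<Sum>j\<in>Nb i. \<Delta> t i j s) = y t i s - ystar i s"
    and \<Delta>skew: "\<And>i j s. s < S \<Longrightarrow> \<Delta> t j i s = - \<Delta> t i j s"
    and \<Delta>step: "\<And>i j s. \<Delta> (Suc t) i j s = \<Delta> t i j s + \<alpha> t * (mu t i s - mu t j s)"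
  shows "(\<Sum>i<N. \<Sum>j\<in>Nb i. \<Sum>s<S. (\<Delta> (Suc t) i j s)\<^sup>2)
    \<le> (\<Sum>i<N. \<Sum>j\<in>Nb i. \<Sum>s<S. (\<Delta> t i j s)\<^sup>2) - 4 * \<alpha> t * ((\<Sum>i<N. Pf i (y t i)) - J)
      + (\<alpha> t)\<^sup>2 * (\<Sum>i<N. \<Sum>j\<in>Nb i. \<Sum>s<S. 4 * Mb\<^sup>2)"
proof -
  define g where "g i j s = mu t i s - mu t j s" for i j s
  define A where "A = (\<Sum>i<N. \<Sum>j\<in>Nb i. \<Sum>s<S. mu t i s * \<Delta> t i j s)"
  define B where "B = (\<Sum>i<N. \<Sum>j\<in>Nb i. \<Sum>s<S. mu t j s * \<Delta> t i j s)"
  define G where "G = (\<Sum>i<N. \<Sum>j\<in>Nb i. \<Sum>s<S. (g i j s)\<^sup>2)"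
  have sq: "(a + b * c)\<^sup>2 = a\<^sup>2 + 2 * b * (c * a) + b\<^sup>2 * c\<^sup>2" for a b c :: real
    by (simp add: power2_eq_square algebra_simps)
  have expand: "(\<Sum>i<N. \<Sum>j\<in>Nb i. \<Sum>s<S. (\<Delta> (Suc t) i j s)\<^sup>2)
      = (\<Sum>i<N. \<Sum>j\<in>Nb i. \<Sum>s<S. (\<Delta> t i j s)\<^sup>2) + 2 * \<alpha> t * (A - B) + (\<alpha> t)\<^sup>2 * G"
  proof -
    have "(\<Sum>i<N. \<Sum>j\<in>Nb i. \<Sum>s<S. (\<Delta> (Suc t) i j s)\<^sup>2) = (\<Sum>i<N. \<Sum>j\<in>Nb i. \<Sum>s<S.
        (\<Delta> t i j s)\<^sup>2 + 2 * \<alpha> t * (g i j s * \<Delta> t i j s) + (\<alpha> t)\<^sup>2 * (g i j s)\<^sup>2)"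
      unfolding \<Delta>step g_def sq by (simp only: mult.assoc)
    also have "\<dots> = (\<Sum>i<N. \<Sum>j\<in>Nb i. \<Sum>s<S. (\<Delta> t i j s)\<^sup>2)
        + 2 * \<alpha> t * (\<Sum>i<N. \<Sum>j\<in>Nb i. \<Sum>s<S. g i j s * \<Delta> t i j s) + (\<alpha> t)\<^sup>2 * G"
      unfolding G_def by (simp only: sum.distrib sum_distrib_left)
    also have "(\<Sum>i<N. \<Sum>j\<in>Nb i. \<Sum>s<S. g i j s * \<Delta> t i j s) = A - B"
      unfolding A_def B_def g_def by (simp only: left_diff_distrib sum_subtractf)
    finally show ?thesis .
  qed
  \<comment> \<open>reversing the edges turns B into -A\<close>
  have "B = (\<Sum>i<N. \<Sum>j\<in>Nb i. \<Sum>s<S. mu t i s * \<Delta> t j i s)"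
    unfolding B_def by (rule sum_edges_swap[OF nb])
  also have "\<dots> = (\<Sum>i<N. \<Sum>j\<in>Nb i. \<Sum>s<S. - (mu t i s * \<Delta> t i j s))"
    apply (intro sum.cong refl)
    subgoal for i j s using \<Delta>skew[of s j i] by simp
    done
  also have "\<dots> = - A" unfolding A_def by (simp only: sum_negf)
  finally have BA: "B = - A" .
  have "A = (\<Sum>i<N. \<Sum>s<S. \<Sum>j\<in>Nb i. mu t i s * \<Delta> t i j s)"
    unfolding A_def by (rule sum.cong[OF refl]) (rule sum.swap)
  also have "\<dots> = (\<Sum>i<N. \<Sum>s<S. mu t i s * (\<Sum>j\<in>Nb i. \<Delta> t i j s))"
    by (simp add: sum_distrib_left)
  also have "\<dots> = (\<Sum>i<N. \<Sum>s<S. mu t i s * (y t i s - ystar i s))"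
    using \<Delta>sum by (intro sum.cong refl) auto
  also have "\<dots> \<le> (\<Sum>i<N. Pf i (ystar i) - Pf i (y t i))"
  proof (rule sum_mono)
    fix i assume "i \<in> {..<N}"
    then have "Pf i (y t i) - (\<Sum>s<S. mu t i s * (ystar i s - y t i s)) \<le> Pf i (ystar i)" using subg by blast
    moreover have "(\<Sum>s<S. mu t i s * (y t i s - ystar i s)) = - (\<Sum>s<S. mu t i s * (ystar i s - y t i s))"
      by (simp add: sum_negf[symmetric] algebra_simps)
    ultimately show "(\<Sum>s<S. mu t i s * (y t i s - ystar i s)) \<le> Pf i (ystar i) - Pf i (y t i)" by linarith
  qed
  also have "\<dots> \<le> J - (\<Sum>i<N. Pf i (y t i))" using ystar_val by (simp add: sum_subtractf)
  finally have AJ: "A \<le> J - (\<Sum>i<N. Pf i (y t i))" .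
  have "G \<le> (\<Sum>i<N. \<Sum>j\<in>Nb i. \<Sum>s<S. 4 * Mb\<^sup>2)" unfolding G_def
  proof (intro sum_mono)
    fix i j s assume "i \<in> {..<N}" "j \<in> Nb i" "s \<in> {..<S}"
    moreover have "j < N" using nb \<open>i \<in> {..<N}\<close> \<open>j \<in> Nb i\<close> unfolding sym_nbrs_def by auto
    ultimately have "\<bar>mu t i s\<bar> \<le> Mb" "\<bar>mu t j s\<bar> \<le> Mb" using mub by auto
    then have "\<bar>g i j s\<bar> \<le> 2 * Mb" unfolding g_def by linarith
    then have "\<bar>g i j s\<bar>\<^sup>2 \<le> (2 * Mb)\<^sup>2" by (intro power_mono) auto
    then have "(g i j s)\<^sup>2 \<le> (2 * Mb)\<^sup>2" by simp
    then show "(g i j s)\<^sup>2 \<le> 4 * Mb\<^sup>2" by (simp add: power2_eq_square)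
  qed
  then have "(\<alpha> t)\<^sup>2 * G \<le> (\<alpha> t)\<^sup>2 * (\<Sum>i<N. \<Sum>j\<in>Nb i. \<Sum>s<S. 4 * Mb\<^sup>2)" by (intro mult_left_mono) auto
  moreover have "2 * \<alpha> t * (A - B) = 4 * \<alpha> t * A" unfolding BA by simp
  moreover have "4 * \<alpha> t * A \<le> 4 * \<alpha> t * (J - (\<Sum>i<N. Pf i (y t i)))"
    using AJ \<alpha>0 by (intro mult_left_mono) auto
  moreover have "4 * \<alpha> t * (J - (\<Sum>i<N. Pf i (y t i))) = - 4 * \<alpha> t * ((\<Sum>i<N. Pf i (y t i)) - J)"
    by (simp add: algebra_simps)
  ultimately show ?thesis unfolding expand by linarith
qed

lemma subgradient_consensus_limit_le:
  fixes y mu :: "nat \<Rightarrow> nat \<Rightarrow> nat \<Rightarrow> real" and Pf :: "nat \<Rightarrow> (nat \<Rightarrow> real) \<Rightarrow> real"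
    and ystar :: "nat \<Rightarrow> nat \<Rightarrow> real"
  assumes conn: "conn_undirected N Nb" and aB: "assumptionB \<alpha>"
    and upd: "\<And>t i s. i < N \<Longrightarrow> s < S \<Longrightarrow> y (Suc t) i s = y t i s + \<alpha> t * (\<Sum>j\<in>Nb i. mu t i s - mu t j s)"
    and subg: "\<And>t i y'. i < N \<Longrightarrow> Pf i (y t i) - (\<Sum>s<S. mu t i s * (y' s - y t i s)) \<le> Pf i y'"
    and mub: "\<And>t i s. i < N \<Longrightarrow> s < S \<Longrightarrow> \<bar>mu t i s\<bar> \<le> Mb"
    and ystar_sum: "\<And>s. s < S \<Longrightarrow> (\<Sum>i<N. ystar i s) = (\<Sum>i<N. y 0 i s)"
    and ystar_val: "(\<Sum>i<N. Pf i (ystar i)) \<le> J"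
    and lowb: "\<And>t. J \<le> (\<Sum>i<N. Pf i (y t i))"
    and lim: "(\<lambda>t. \<Sum>i<N. Pf i (y t i)) \<longlonglongrightarrow> Finf"
  shows "Finf \<le> J"
proof -
  have \<alpha>0: "\<And>t. 0 \<le> \<alpha> t" and div: "filterlim (\<lambda>T. \<Sum>t<T. \<alpha> t) at_top sequentially"
    and sq: "summable (\<lambda>t. (\<alpha> t)\<^sup>2)" using aB unfolding assumptionB_def by auto
  obtain \<Delta> where \<Delta>: "\<And>t i s. i < N \<Longrightarrow> s < S \<Longrightarrow> (\<Sum>j\<in>Nb i. \<Delta> t i j s) = y t i s - ystar i s"
    "\<And>t i j s. s < S \<Longrightarrow> \<Delta> t j i s = - \<Delta> t i j s"
    "\<And>t i j s. \<Delta> (Suc t) i j s = \<Delta> t i j s + \<alpha> t * (mu t i s - mu t j s)"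
    using skew_edge_potential[where y=y and mu=mu and \<alpha>=\<alpha> and ystar=ystar, OF conn upd ystar_sum]
    by blast
  define F where "F t = (\<Sum>i<N. Pf i (y t i))" for t
  define V where "V t = (\<Sum>i<N. \<Sum>j\<in>Nb i. \<Sum>s<S. (\<Delta> t i j s)\<^sup>2)" for t
  define Gb where "Gb = (\<Sum>i<N. \<Sum>j\<in>Nb i. \<Sum>s<S. 4 * Mb\<^sup>2)"
  have V0: "0 \<le> V t" for t unfolding V_def by (intro sum_nonneg) auto
  have Gb0: "0 \<le> Gb" unfolding Gb_def by (intro sum_nonneg) auto
  have step: "V (Suc t) \<le> V t - 4 * \<alpha> t * (F t - J) + (\<alpha> t)\<^sup>2 * Gb" for t
    unfolding V_def F_def Gb_def
    by (rule lyapunov_descent[where y=y and mu=mu and Pf=Pf and ystar=ystar and \<Delta>=\<Delta> and \<alpha>=\<alpha>,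
          OF conn_undirected_sym_nbrs[OF conn] \<alpha>0 subg mub ystar_val \<Delta>])
  have tele: "4 * (\<Sum>t<T. \<alpha> t * (F t - J)) \<le> V 0 - V T + Gb * (\<Sum>t<T. (\<alpha> t)\<^sup>2)" for T
  proof (induction T)
    case (Suc T) then show ?case using step[of T] by (simp add: algebra_simps)
  qed simp
  have "(\<Sum>t<T. \<alpha> t * (F t - J)) \<le> (V 0 + Gb * suminf (\<lambda>t. (\<alpha> t)\<^sup>2)) / 4" for T
  proof -
    have "Gb * (\<Sum>t<T. (\<alpha> t)\<^sup>2) \<le> Gb * suminf (\<lambda>t. (\<alpha> t)\<^sup>2)"
      using sq Gb0 by (intro mult_left_mono sum_le_suminf) auto
    then have "4 * (\<Sum>t<T. \<alpha> t * (F t - J)) \<le> V 0 + Gb * suminf (\<lambda>t. (\<alpha> t)\<^sup>2)"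
      using tele[of T] V0[of T] by linarith
    then show ?thesis by simp
  qed
  then show ?thesis
    using weighted_excess_limit_le[OF \<alpha>0 div _ lim[folded F_def]] lowb unfolding F_def by blast
qed

section \<open>The restricted LP\<close>

lemma lpr_opt_slater_mix:
  fixes N S :: nat and n :: "nat \<Rightarrow> nat"
  assumes opt: "lpr_opt N S n c A b r X zo"
    and zh: "\<forall>i<N. zh i \<in> convh (X i)" and zeta: "zeta N S n A b r zh > 0"
    and z: "\<forall>i<N. z i \<in> convh (X i)" and V0: "0 \<le> V"
    and cons: "\<forall>s<S. (\<Sum>i<N. dotp (n i) (A i s) (z i)) \<le> b s - r s + V"
  shows "(V + zeta N S n A b r zh) * (\<Sum>i<N. dotp (n i) (c i) (zo i))
         \<le> zeta N S n A b r zh * (\<Sum>i<N. dotp (n i) (c i) (z i)) + V * (\<Sum>i<N. dotp (n i) (c i) (zh i))"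
proof -
  define \<zeta> where "\<zeta> = zeta N S n A b r zh"
  have \<zeta>_le: "\<zeta> \<le> b s - r s - (\<Sum>i<N. dotp (n i) (A i s) (zh i))" if "s < S" for s
    unfolding \<zeta>_def zeta_def using that by (intro Min_le) auto
  \<comment> \<open>the weight on the Slater point that exactly absorbs the violation V\<close>
  define \<theta> where "\<theta> = V / (V + \<zeta>)"
  have \<zeta>_pos: "\<zeta> > 0" using zeta unfolding \<zeta>_def .
  have \<theta>: "0 \<le> \<theta>" "\<theta> \<le> 1" unfolding \<theta>_def using \<zeta>_pos V0 by auto
  have \<theta>_balance: "(1 - \<theta>) * V = \<theta> * \<zeta>" unfolding \<theta>_def using \<zeta>_pos V0 by (simp add: field_simps)
  define z' where "z' i = (\<lambda>j. \<theta> * zh i j + (1 - \<theta>) * z i j)" for i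
  have feas: "lpr_feas N S n A b r X z'"
    unfolding lpr_feas_def
  proof (intro conjI allI impI)
    fix i assume "i < N" then show "z' i \<in> convh (X i)" unfolding z'_def using zh z \<theta> by (intro convh_convex_comb) auto
  next
    fix s assume s: "s < S"
    have "(\<Sum>i<N. dotp (n i) (A i s) (z' i)) = \<theta> * (\<Sum>i<N. dotp (n i) (A i s) (zh i)) + (1 - \<theta>) * (\<Sum>i<N. dotp (n i) (A i s) (z i))"
      unfolding z'_def dotp_linear_comb by (simp add: sum.distrib sum_distrib_left)
    also have "\<dots> \<le> \<theta> * (b s - r s - \<zeta>) + (1 - \<theta>) * (b s - r s + V)"
      using \<zeta>_le[OF s] cons s \<theta> by (intro add_mono mult_left_mono) auto
    also have "\<dots> = b s - r s" using \<theta>_balance by (simp add: algebra_simps)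
    finally show "(\<Sum>i<N. dotp (n i) (A i s) (z' i)) \<le> b s - r s" .
  qed
  have "(\<Sum>i<N. dotp (n i) (c i) (zo i)) \<le> (\<Sum>i<N. dotp (n i) (c i) (z' i))"
    using opt feas unfolding lpr_opt_def by blast
  also have "\<dots> = \<theta> * (\<Sum>i<N. dotp (n i) (c i) (zh i)) + (1 - \<theta>) * (\<Sum>i<N. dotp (n i) (c i) (z i))"
    unfolding z'_def dotp_linear_comb by (simp add: sum.distrib sum_distrib_left)
  finally have "(V + \<zeta>) * (\<Sum>i<N. dotp (n i) (c i) (zo i)) \<le> (V + \<zeta>) * (\<theta> * (\<Sum>i<N. dotp (n i) (c i) (zh i)) + (1 - \<theta>) * (\<Sum>i<N. dotp (n i) (c i) (z i)))"
    using \<zeta>_pos V0 by (intro mult_left_mono) auto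
  also have "\<dots> = ((V + \<zeta>) * \<theta>) * (\<Sum>i<N. dotp (n i) (c i) (zh i)) + ((V + \<zeta>) * (1 - \<theta>)) * (\<Sum>i<N. dotp (n i) (c i) (z i))"
    by (simp only: distrib_left mult.assoc)
  also have "(V + \<zeta>) * \<theta> = V" unfolding \<theta>_def using \<zeta>_pos V0 by simp
  also have "(V + \<zeta>) * (1 - \<theta>) = \<zeta>" unfolding \<theta>_def using \<zeta>_pos V0 by (simp add: field_simps)
  finally have "(V + \<zeta>) * (\<Sum>i<N. dotp (n i) (c i) (zo i)) \<le> \<zeta> * (\<Sum>i<N. dotp (n i) (c i) (z i)) + V * (\<Sum>i<N. dotp (n i) (c i) (zh i))"
    by simp
  then show ?thesis unfolding \<zeta>_def .
qed

lemma lpr_perturb: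
  fixes N S :: nat and n :: "nat \<Rightarrow> nat"
  assumes feas: "lpr_feas N S n A b r X zi" and I: "I \<subseteq> {..<N}"
    and dd: "\<And>i t. i \<in> I \<Longrightarrow> \<bar>t\<bar> \<le> 1 \<Longrightarrow> (\<lambda>j. zi i j + t * dd i j) \<in> convh (X i)"
    and tau: "\<And>i. i \<in> I \<Longrightarrow> \<bar>\<tau> i\<bar> \<le> 1"
    and bal: "\<And>s. s < S \<Longrightarrow> (\<Sum>i\<in>I. \<tau> i * dotp (n i) (A i s) (dd i)) = 0"
  defines "z' \<equiv> (\<lambda>i. if i \<in> I then (\<lambda>j. zi i j + \<tau> i * dd i j) else zi i)"
  shows "lpr_feas N S n A b r X z'"
    and "(\<Sum>i<N. dotp (n i) (c i) (z' i)) = (\<Sum>i<N. dotp (n i) (c i) (zi i)) + (\<Sum>i\<in>I. \<tau> i * dotp (n i) (c i) (dd i))"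
proof -
  have perturbed_sum: "(\<Sum>i<N. dotp (n i) (u i) (z' i)) = (\<Sum>i<N. dotp (n i) (u i) (zi i)) + (\<Sum>i\<in>I. \<tau> i * dotp (n i) (u i) (dd i))" for u
  proof -
    have "(\<Sum>i<N. dotp (n i) (u i) (z' i)) = (\<Sum>i<N. dotp (n i) (u i) (zi i) + (if i \<in> I then \<tau> i * dotp (n i) (u i) (dd i) else 0))"
      unfolding z'_def by (intro sum.cong refl) (simp add: dotp_add_scaled)
    also have "\<dots> = (\<Sum>i<N. dotp (n i) (u i) (zi i)) + (\<Sum>i\<in>{..<N} \<inter> I. \<tau> i * dotp (n i) (u i) (dd i))"
      by (simp add: sum.distrib sum.inter_restrict)
    also have "{..<N} \<inter> I = I" using I by auto
    finally show ?thesis .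
  qed
  show "lpr_feas N S n A b r X z'" unfolding lpr_feas_def
  proof (intro conjI allI impI)
    fix i assume i: "i < N"
    show "z' i \<in> convh (X i)"
    proof (cases "i \<in> I")
      case True then show ?thesis unfolding z'_def using dd tau by simp
    next
      case False then show ?thesis unfolding z'_def using feas i unfolding lpr_feas_def by simp
    qed
  next
    fix s assume s: "s < S"
    have "(\<Sum>i<N. dotp (n i) (A i s) (z' i)) = (\<Sum>i<N. dotp (n i) (A i s) (zi i))"
      using perturbed_sum[of "\<lambda>i. A i s"] bal[OF s] by simp
    then show "(\<Sum>i<N. dotp (n i) (A i s) (z' i)) \<le> b s - r s" using feas s unfolding lpr_feas_def by simp
  qed
  show "(\<Sum>i<N. dotp (n i) (c i) (z' i)) = (\<Sum>i<N. dotp (n i) (c i) (zi i)) + (\<Sum>i\<in>I. \<tau> i * dotp (n i) (c i) (dd i))"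
    by (rule perturbed_sum)
qed

lemma exists_balanced_perturbation:
  fixes N S :: nat and n :: "nat \<Rightarrow> nat"
  assumes feas: "lpr_feas N S n A b r X zi"
    and I: "I = {i. i < N \<and> zi i \<notin> X i}" and cI: "card I > S"
  obtains i0 \<tau> dd where "i0 \<in> I" "\<tau> i0 \<noteq> 0" "dd i0 \<noteq> (\<lambda>_. 0)"
    "\<And>i. i \<in> I \<Longrightarrow> \<bar>\<tau> i\<bar> \<le> 1"
    "\<And>i t. i \<in> I \<Longrightarrow> \<bar>t\<bar> \<le> 1 \<Longrightarrow> (\<lambda>j. zi i j + t * dd i j) \<in> convh (X i)"
    "\<And>s. s < S \<Longrightarrow> (\<Sum>i\<in>I. \<tau> i * dotp (n i) (A i s) (dd i)) = 0"
proof -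
  have fI: "finite I" unfolding I by simp
  have "\<forall>i\<in>I. \<exists>d. d \<noteq> (\<lambda>_. 0) \<and> (\<forall>t. \<bar>t\<bar> \<le> 1 \<longrightarrow> (\<lambda>j. zi i j + t * d j) \<in> convh (X i))"
  proof
    fix i assume "i \<in> I"
    then have "zi i \<in> convh (X i)" "zi i \<notin> X i" using feas unfolding I lpr_feas_def by auto
    then show "\<exists>d. d \<noteq> (\<lambda>_. 0) \<and> (\<forall>t. \<bar>t\<bar> \<le> 1 \<longrightarrow> (\<lambda>j. zi i j + t * d j) \<in> convh (X i))"
      by (rule two_sided_direction_in_convh)
  qed
  then obtain dd where "\<forall>i\<in>I. dd i \<noteq> (\<lambda>_. 0) \<and>
      (\<forall>t. \<bar>t\<bar> \<le> 1 \<longrightarrow> (\<lambda>j. zi i j + t * dd i j) \<in> convh (X i))"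
    by (metis bchoice)
  then have dd: "\<And>i. i \<in> I \<Longrightarrow> dd i \<noteq> (\<lambda>_. 0)"
    "\<And>i t. i \<in> I \<Longrightarrow> \<bar>t\<bar> \<le> 1 \<Longrightarrow> (\<lambda>j. zi i j + t * dd i j) \<in> convh (X i)"
    by blast+
  obtain l where l: "\<exists>i\<in>I. l i \<noteq> 0" "\<forall>s<S. (\<Sum>i\<in>I. l i * dotp (n i) (A i s) (dd i)) = 0"
    using exists_linear_dependence[OF fI cI, of "\<lambda>i s. dotp (n i) (A i s) (dd i)"] by (elim exE conjE)
  obtain i0 where i0: "i0 \<in> I" "l i0 \<noteq> 0" using l(1) by blast
  define K where "K = Max ((\<lambda>i. \<bar>l i\<bar>) ` I)"
  have Kge: "\<bar>l i\<bar> \<le> K" if "i \<in> I" for i unfolding K_def using fI that by (intro Max_ge) auto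
  have Kpos: "K > 0" using Kge[OF i0(1)] i0(2) by simp
  show ?thesis
  proof (rule that[of i0 "\<lambda>i. l i / K" dd])
    show "\<bar>l i / K\<bar> \<le> 1" if "i \<in> I" for i
      using Kge[OF that] Kpos by (simp add: abs_divide)
    show "(\<Sum>i\<in>I. l i / K * dotp (n i) (A i s) (dd i)) = 0" if "s < S" for s
      using l(2) that by (simp add: sum_divide_distrib[symmetric])
    show "i0 \<in> I" "dd i0 \<noteq> (\<lambda>_. 0)" using i0 dd(1) by blast+
    show "l i0 / K \<noteq> 0" using i0(2) Kpos by simp
    show "(\<lambda>j. zi i j + t * dd i j) \<in> convh (X i)" if "i \<in> I" "\<bar>t\<bar> \<le> 1" for i t
      using dd(2) that .
  qed
qed

lemma lpr_unique_opt_few_non_vertex_blocks: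
  fixes N S :: nat and n :: "nat \<Rightarrow> nat"
  assumes uniq: "\<And>z'. lpr_opt N S n c A b r X z' \<Longrightarrow> \<forall>i<N. z' i = zu i"
    and opt: "lpr_opt N S n c A b r X zi"
  shows "card {i. i < N \<and> zi i \<notin> X i} \<le> S"
proof (rule ccontr)
  define I where "I = {i. i < N \<and> zi i \<notin> X i}"
  assume "\<not> card {i. i < N \<and> zi i \<notin> X i} \<le> S"
  then have cI: "card I > S" unfolding I_def by simp
  have IN: "I \<subseteq> {..<N}" unfolding I_def by auto
  have feas: "lpr_feas N S n A b r X zi" using opt unfolding lpr_opt_def by blast
  obtain i0 \<tau> dd where i0: "i0 \<in> I" "\<tau> i0 \<noteq> 0" "dd i0 \<noteq> (\<lambda>_. 0)"
    and \<tau>: "\<And>i. i \<in> I \<Longrightarrow> \<bar>\<tau> i\<bar> \<le> 1"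
    and dd: "\<And>i t. i \<in> I \<Longrightarrow> \<bar>t\<bar> \<le> 1 \<Longrightarrow> (\<lambda>j. zi i j + t * dd i j) \<in> convh (X i)"
    and bal: "\<And>s. s < S \<Longrightarrow> (\<Sum>i\<in>I. \<tau> i * dotp (n i) (A i s) (dd i)) = 0"
    by (rule exists_balanced_perturbation[OF feas I_def cI]) blast
  have \<tau>': "\<bar>- \<tau> i\<bar> \<le> 1" if "i \<in> I" for i using \<tau>[OF that] by simp
  have bal': "(\<Sum>i\<in>I. (- \<tau> i) * dotp (n i) (A i s) (dd i)) = 0" if "s < S" for s
    using bal[OF that] by (simp add: sum_negf)
  define cost where "cost z = (\<Sum>i<N. dotp (n i) (c i) (z i))" for z
  define Q where "Q = (\<Sum>i\<in>I. \<tau> i * dotp (n i) (c i) (dd i))"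
  define zp where "zp = (\<lambda>i. if i \<in> I then (\<lambda>j. zi i j + \<tau> i * dd i j) else zi i)"
  define zm where "zm = (\<lambda>i. if i \<in> I then (\<lambda>j. zi i j + (- \<tau> i) * dd i j) else zi i)"
  \<comment> \<open>moving both ways stays feasible, so optimality of zi forces a zero cost change\<close>
  have zp: "lpr_feas N S n A b r X zp" "cost zp = cost zi + Q"
    using lpr_perturb(1)[where \<tau>=\<tau>, OF feas IN dd \<tau> bal]
      lpr_perturb(2)[where \<tau>=\<tau> and c=c, OF feas IN dd \<tau> bal]
    unfolding zp_def cost_def Q_def by simp_all
  have zm: "lpr_feas N S n A b r X zm" "cost zm = cost zi - Q"
    using lpr_perturb(1)[where \<tau>="\<lambda>i. - \<tau> i", OF feas IN dd \<tau>' bal']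
      lpr_perturb(2)[where \<tau>="\<lambda>i. - \<tau> i" and c=c, OF feas IN dd \<tau>' bal']
    unfolding zm_def cost_def Q_def by (simp_all add: sum_negf)
  have "cost zi \<le> cost zp" "cost zi \<le> cost zm"
    using opt zp(1) zm(1) unfolding lpr_opt_def cost_def by blast+
  then have "Q = 0" using zp(2) zm(2) by linarith
  then have "lpr_opt N S n c A b r X zp"
    using zp opt unfolding lpr_opt_def cost_def by simp
  then have "zp i0 = zi i0" using uniq[of zp] uniq[OF opt] i0(1) IN by auto
  then have "\<tau> i0 * dd i0 j = 0" for j unfolding zp_def using i0(1) by (metis add_cancel_left_right)
  then show False using i0(2,3) by auto
qed

definition lpr_cost :: "nat \<Rightarrow> (nat \<Rightarrow> nat) \<Rightarrow> (nat \<Rightarrow> nat \<Rightarrow> real) \<Rightarrow> (nat \<Rightarrow> nat \<Rightarrow> real) \<Rightarrow> real" where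
  "lpr_cost N n c z = (\<Sum>i<N. dotp (n i) (c i) (z i))"

text \<open>A penalty weight above which violating the coupling constraints of (LP_r) never pays.\<close>
definition penalty_threshold :: "nat \<Rightarrow> nat \<Rightarrow> (nat \<Rightarrow> nat) \<Rightarrow> (nat \<Rightarrow> nat \<Rightarrow> real)
    \<Rightarrow> (nat \<Rightarrow> nat \<Rightarrow> nat \<Rightarrow> real) \<Rightarrow> (nat \<Rightarrow> real) \<Rightarrow> (nat \<Rightarrow> real)
    \<Rightarrow> (nat \<Rightarrow> nat \<Rightarrow> real) \<Rightarrow> (nat \<Rightarrow> nat \<Rightarrow> real) \<Rightarrow> real" where
  "penalty_threshold N S n c A b r zo zh =
     max 0 (lpr_cost N n c zh - lpr_cost N n c zo) / zeta N S n A b r zh"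

lemma lpr_exact_penalty:
  fixes N S :: nat and n :: "nat \<Rightarrow> nat"
  assumes opt: "lpr_opt N S n c A b r X zo" and sl: "slater_point N S n A b r X zh"
    and z: "\<forall>i<N. z i \<in> convh (X i)" and V0: "0 \<le> V"
    and cons: "\<forall>s<S. (\<Sum>i<N. dotp (n i) (A i s) (z i)) \<le> b s - r s + V"
  shows "lpr_cost N n c zo \<le> lpr_cost N n c z + penalty_threshold N S n c A b r zo zh * V"
proof -
  define \<zeta> where "\<zeta> = zeta N S n A b r zh"
  have zh: "\<forall>i<N. zh i \<in> convh (X i)" and \<zeta>: "\<zeta> > 0" using sl unfolding slater_point_def \<zeta>_def by auto
  have "(V + \<zeta>) * lpr_cost N n c zo \<le> \<zeta> * lpr_cost N n c z + V * lpr_cost N n c zh"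
    unfolding \<zeta>_def lpr_cost_def by (rule lpr_opt_slater_mix[OF opt zh \<zeta>[unfolded \<zeta>_def] z V0 cons])
  then have "\<zeta> * lpr_cost N n c zo \<le> \<zeta> * lpr_cost N n c z + V * (lpr_cost N n c zh - lpr_cost N n c zo)"
    by (simp add: algebra_simps)
  also have "V * (lpr_cost N n c zh - lpr_cost N n c zo) \<le> V * (\<zeta> * penalty_threshold N S n c A b r zo zh)"
    using V0 \<zeta> unfolding penalty_threshold_def \<zeta>_def[symmetric] by (intro mult_left_mono) auto
  finally have "\<zeta> * lpr_cost N n c zo \<le> \<zeta> * (lpr_cost N n c z + penalty_threshold N S n c A b r zo zh * V)"
    by (simp add: algebra_simps)
  then show ?thesis using \<zeta> by simp
qed

lemma J_milp_lower_bound: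
  fixes N S :: nat and n :: "nat \<Rightarrow> nat"
  assumes opt: "lpr_opt N S n c A b r X zo" and sl: "slater_point N S n A b r X zh"
    and \<sigma>0: "0 \<le> \<sigma>" and r: "\<forall>s<S. r s \<le> \<sigma>"
    and milp_feasible: "\<exists>x. milp_feas N S n A b X x"
  shows "(1 + \<sigma> / zeta N S n A b r zh) * lpr_cost N n c zo - \<sigma> / zeta N S n A b r zh * lpr_cost N n c zh
    \<le> J_milp N S n c A b X"
  unfolding J_milp_def
proof (rule cInf_greatest)
  show "{\<Sum>i<N. dotp (n i) (c i) (x i) |x. milp_feas N S n A b X x} \<noteq> {}" using milp_feasible by blast
next
  define \<zeta> where "\<zeta> = zeta N S n A b r zh"
  have zh: "\<forall>i<N. zh i \<in> convh (X i)" and \<zeta>: "\<zeta> > 0" using sl unfolding slater_point_def \<zeta>_def by auto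
  fix m assume "m \<in> {\<Sum>i<N. dotp (n i) (c i) (x i) |x. milp_feas N S n A b X x}"
  then obtain x where mf: "milp_feas N S n A b X x" and m: "m = lpr_cost N n c x"
    unfolding lpr_cost_def by blast
  \<comment> \<open>an MILP solution violates the restricted constraints by at most \<sigma>\<close>
  have "\<forall>i<N. x i \<in> convh (X i)" using mf convh_inc unfolding milp_feas_def by blast
  moreover have "\<forall>s<S. (\<Sum>i<N. dotp (n i) (A i s) (x i)) \<le> b s - r s + \<sigma>"
  proof (intro allI impI)
    fix s assume "s < S"
    then have "(\<Sum>i<N. dotp (n i) (A i s) (x i)) \<le> b s" "r s \<le> \<sigma>" using mf r unfolding milp_feas_def by auto
    then show "(\<Sum>i<N. dotp (n i) (A i s) (x i)) \<le> b s - r s + \<sigma>" by linarith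
  qed
  ultimately have "(\<sigma> + \<zeta>) * lpr_cost N n c zo \<le> \<zeta> * lpr_cost N n c x + \<sigma> * lpr_cost N n c zh"
    unfolding \<zeta>_def lpr_cost_def by (rule lpr_opt_slater_mix[OF opt zh \<zeta>[unfolded \<zeta>_def] _ \<sigma>0])
  then have "((\<sigma> + \<zeta>) * lpr_cost N n c zo - \<sigma> * lpr_cost N n c zh) / \<zeta> \<le> m"
    unfolding m using \<zeta> by (simp add: pos_divide_le_eq algebra_simps)
  moreover have "((\<sigma> + \<zeta>) * lpr_cost N n c zo - \<sigma> * lpr_cost N n c zh) / \<zeta>
      = (1 + \<sigma> / \<zeta>) * lpr_cost N n c zo - \<sigma> / \<zeta> * lpr_cost N n c zh"
    using \<zeta> by (simp add: field_simps)
  ultimately show "(1 + \<sigma> / \<zeta>) * lpr_cost N n c zo - \<sigma> / \<zeta> * lpr_cost N n c zh \<le> m" by simp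
qed

lemma sub_opt_pval:
  assumes "sub_opt k cv As S X y z"
  shows "pval k cv As S X y = dotp k cv z"
  unfolding pval_def using assms unfolding sub_opt_def by (intro cInf_eq_minimum) auto

lemma p3_lexopt_cost_le:
  assumes lex: "p3_lexopt k cv As S X y x \<rho> \<xi>" and zX: "z \<in> X" and zf: "sub_feas k As S X y z"
  shows "dotp k cv x \<le> dotp k cv z"
proof -
  have f0: "p3_feas k cv As S X y z 0 (dotp k cv z)"
    using zX zf unfolding p3_feas_def sub_feas_def by auto
  then have "\<rho> \<le> 0" using lex unfolding p3_lexopt_def by blast
  moreover have "0 \<le> \<rho>" using lex unfolding p3_lexopt_def p3_feas_def by blast
  ultimately have "\<rho> = 0" by simp
  then have "\<xi> \<le> dotp k cv z" using lex f0 unfolding p3_lexopt_def by blast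
  moreover have "dotp k cv x \<le> \<xi>" using lex unfolding p3_lexopt_def p3_feas_def by blast
  ultimately show ?thesis by simp
qed

lemma sigma_asy_nonneg:
  assumes N: "0 < N" and S: "0 < S" and xL: "xL 0 \<in> X 0"
    and X0: "compact (X 0)" "X 0 \<noteq> {}"
  shows "0 \<le> sigma_asy N S n A X xL"
proof -
  obtain x where "\<And>w. w \<in> X 0 \<Longrightarrow> dotp (n 0) (A 0 0) x \<le> dotp (n 0) (A 0 0) w"
    using dotp_attains_min[OF X0] by blast
  then have "bdd_below {dotp (n 0) (A 0 0) w | w. w \<in> X 0}" unfolding bdd_below_def by blast
  then have "Lmin (n 0) (A 0) (X 0) 0 \<le> dotp (n 0) (A 0 0) (xL 0)"
    unfolding Lmin_def by (rule cInf_lower[rotated]) (use xL in blast)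
  moreover have "(\<lambda>(i, s). dotp (n i) (A i s) (xL i) - Lmin (n i) (A i) (X i) s) (0, 0)
      \<le> Max ((\<lambda>(i, s). dotp (n i) (A i s) (xL i) - Lmin (n i) (A i) (X i) s) ` ({..<N} \<times> {..<S}))"
    using N S by (intro Max_ge) auto
  ultimately show ?thesis unfolding sigma_asy_def by simp
qed

section \<open>Limit of the distributed algorithm\<close>

lemma algo_run_alloc_sum:
  assumes conn: "conn_undirected N Nb" and run: "algo_run N S n c A b r X Nb M \<alpha> y z v mu"
    and s: "s < S"
  shows "(\<Sum>i<N. y t i s) = b s - r s"
proof (induction t)
  case 0
  then show ?case using run s unfolding algo_run_def by blast
next
  case (Suc t)
  \<comment> \<open>each edge transfers the same amount in both directions\<close>
  have "(\<Sum>i<N. \<Sum>j\<in>Nb i. mu t j s) = (\<Sum>i<N. \<Sum>j\<in>Nb i. mu t i s)"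
    by (rule sum_edges_swap[OF conn_undirected_sym_nbrs[OF conn]])
  then have flow0: "(\<Sum>i<N. \<Sum>j\<in>Nb i. mu t i s - mu t j s) = 0" by (simp add: sum_subtractf)
  have "(\<Sum>i<N. y (Suc t) i s) = (\<Sum>i<N. y t i s + \<alpha> t * (\<Sum>j\<in>Nb i. mu t i s - mu t j s))"
    using run s unfolding algo_run_def by (intro sum.cong) auto
  also have "\<dots> = (\<Sum>i<N. y t i s) + \<alpha> t * (\<Sum>i<N. \<Sum>j\<in>Nb i. mu t i s - mu t j s)"
    by (simp add: sum.distrib sum_distrib_left)
  finally show ?case using Suc flow0 by simp
qed

lemma pen_val_sum_tendsto:
  assumes ag: "\<forall>i<N. penalized_agent (n i) (X i) M"
    and lim: "\<forall>i<N. \<forall>s<S. (\<lambda>t. y t i s) \<longlonglongrightarrow> yinf i s"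
  shows "(\<lambda>t. \<Sum>i<N. pen_val (n i) (c i) (A i) S (X i) M (y t i))
    \<longlonglongrightarrow> (\<Sum>i<N. pen_val (n i) (c i) (A i) S (X i) M (yinf i))"
proof (rule tendsto_sum)
  fix i assume "i \<in> {..<N}"
  then have i: "i < N" by simp
  define P where "P = pen_val (n i) (c i) (A i) S (X i) M"
  define g where "g t = M * (\<Sum>s<S. \<bar>y t i s - yinf i s\<bar>)" for t
  have "g \<longlonglongrightarrow> M * (\<Sum>s<S. \<bar>yinf i s - yinf i s\<bar>)"
    unfolding g_def using lim i by (intro tendsto_intros) auto
  then have g0: "g \<longlonglongrightarrow> 0" by simp
  have "norm (P (y t i) - P (yinf i)) \<le> g t" for t
    using penalized_agent.pen_val_lipschitz[OF ag[rule_format, OF i], of "c i" "A i" S "y t i" "yinf i"]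
      penalized_agent.pen_val_lipschitz[OF ag[rule_format, OF i], of "c i" "A i" S "yinf i" "y t i"]
    unfolding g_def P_def by (simp add: abs_minus_commute)
  then have "(\<lambda>t. P (y t i) - P (yinf i)) \<longlonglongrightarrow> 0"
    by (intro Lim_null_comparison[OF _ g0]) simp
  then show "(\<lambda>t. P (y t i)) \<longlonglongrightarrow> P (yinf i)" by (simp add: LIM_zero_iff)
qed

lemma pen_val_attained_all:
  assumes ag: "\<forall>i<N. penalized_agent (n i) (X i) M"
  obtains zz vv where "\<And>i. i < N \<Longrightarrow> p1_feas (n i) (A i) S (X i) (yy i) (zz i) (vv i)"
    "\<And>i. i < N \<Longrightarrow> dotp (n i) (c i) (zz i) + M * vv i = pen_val (n i) (c i) (A i) S (X i) M (yy i)"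
proof -
  have "\<forall>i\<in>{..<N}. \<exists>p. p1_feas (n i) (A i) S (X i) (yy i) (fst p) (snd p) \<and>
      dotp (n i) (c i) (fst p) + M * snd p = pen_val (n i) (c i) (A i) S (X i) M (yy i)"
    using penalized_agent.pen_val_attained ag by fastforce
  then obtain p where "\<forall>i\<in>{..<N}. p1_feas (n i) (A i) S (X i) (yy i) (fst (p i)) (snd (p i)) \<and>
      dotp (n i) (c i) (fst (p i)) + M * snd (p i) = pen_val (n i) (c i) (A i) S (X i) M (yy i)"
    by (rule bchoice[elim_format]) blast
  then show ?thesis using that[of "\<lambda>i. fst (p i)" "\<lambda>i. snd (p i)"] by auto
qed

lemma lpr_penalized_cost_ge:
  fixes N S :: nat and n :: "nat \<Rightarrow> nat"
  assumes opt: "lpr_opt N S n c A b r X zo" and sl: "slater_point N S n A b r X zh"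
    and yy: "\<forall>s<S. (\<Sum>i<N. yy i s) = b s - r s"
    and f: "\<forall>i<N. p1_feas (n i) (A i) S (X i) (yy i) (zz i) (vv i)"
  shows "lpr_cost N n c zo + (M - penalty_threshold N S n c A b r zo zh) * (\<Sum>i<N. vv i)
    \<le> (\<Sum>i<N. dotp (n i) (c i) (zz i) + M * vv i)"
proof -
  define V where "V = (\<Sum>i<N. vv i)"
  have V0: "0 \<le> V" unfolding V_def using f unfolding p1_feas_def by (intro sum_nonneg) auto
  have "\<forall>i<N. zz i \<in> convh (X i)" using f unfolding p1_feas_def by auto
  moreover have "\<forall>s<S. (\<Sum>i<N. dotp (n i) (A i s) (zz i)) \<le> b s - r s + V"
  proof (intro allI impI)
    fix s assume s: "s < S"
    have "(\<Sum>i<N. dotp (n i) (A i s) (zz i)) \<le> (\<Sum>i<N. yy i s + vv i)"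
      using f s unfolding p1_feas_def by (intro sum_mono) auto
    also have "\<dots> = b s - r s + V" unfolding V_def using yy s by (simp add: sum.distrib)
    finally show "(\<Sum>i<N. dotp (n i) (A i s) (zz i)) \<le> b s - r s + V" .
  qed
  ultimately have "lpr_cost N n c zo \<le> lpr_cost N n c zz + penalty_threshold N S n c A b r zo zh * V"
    by (rule lpr_exact_penalty[OF opt sl _ V0])
  moreover have "(\<Sum>i<N. dotp (n i) (c i) (zz i) + M * vv i) = lpr_cost N n c zz + M * V"
    unfolding V_def lpr_cost_def by (simp add: sum.distrib sum_distrib_left)
  ultimately show ?thesis unfolding V_def[symmetric] by (simp add: algebra_simps)
qed

lemma lpr_cost_le_pen_val_sum:
  fixes N S :: nat and n :: "nat \<Rightarrow> nat"
  assumes ag: "\<forall>i<N. penalized_agent (n i) (X i) M"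
    and opt: "lpr_opt N S n c A b r X zo" and sl: "slater_point N S n A b r X zh"
    and M: "penalty_threshold N S n c A b r zo zh \<le> M"
    and yy: "\<forall>s<S. (\<Sum>i<N. yy i s) = b s - r s"
  shows "lpr_cost N n c zo \<le> (\<Sum>i<N. pen_val (n i) (c i) (A i) S (X i) M (yy i))"
proof -
  obtain zz vv where f: "\<And>i. i < N \<Longrightarrow> p1_feas (n i) (A i) S (X i) (yy i) (zz i) (vv i)"
    and val: "\<And>i. i < N \<Longrightarrow> dotp (n i) (c i) (zz i) + M * vv i = pen_val (n i) (c i) (A i) S (X i) M (yy i)"
    using pen_val_attained_all[OF ag] by metis
  have "0 \<le> (M - penalty_threshold N S n c A b r zo zh) * (\<Sum>i<N. vv i)"
    using M f unfolding p1_feas_def by (intro mult_nonneg_nonneg sum_nonneg) auto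
  moreover have "lpr_cost N n c zo + (M - penalty_threshold N S n c A b r zo zh) * (\<Sum>i<N. vv i)
      \<le> (\<Sum>i<N. dotp (n i) (c i) (zz i) + M * vv i)"
    using f by (intro lpr_penalized_cost_ge[OF opt sl yy]) auto
  moreover have "(\<Sum>i<N. dotp (n i) (c i) (zz i) + M * vv i) = (\<Sum>i<N. pen_val (n i) (c i) (A i) S (X i) M (yy i))"
    using val by (intro sum.cong) auto
  ultimately show ?thesis by linarith
qed

lemma reference_allocation:
  fixes N S :: nat and n :: "nat \<Rightarrow> nat"
  assumes N: "0 < N" and ag: "\<forall>i<N. penalized_agent (n i) (X i) M"
    and opt: "lpr_opt N S n c A b r X zo" and y0: "\<forall>s<S. (\<Sum>i<N. y0 i s) = b s - r s"
  obtains ystar where "\<And>s. s < S \<Longrightarrow> (\<Sum>i<N. ystar i s) = (\<Sum>i<N. y0 i s)"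
    and "(\<Sum>i<N. pen_val (n i) (c i) (A i) S (X i) M (ystar i)) \<le> lpr_cost N n c zo"
proof
  \<comment> \<open>the allocation used by the optimum of (LP_r), the slack going to agent 0\<close>
  define slack where "slack s = b s - r s - (\<Sum>i<N. dotp (n i) (A i s) (zo i))" for s
  define ystar where "ystar i s = dotp (n i) (A i s) (zo i) + (if i = 0 then slack s else 0)" for i s
  have feas: "lpr_feas N S n A b r X zo" using opt unfolding lpr_opt_def by blast
  show "(\<Sum>i<N. ystar i s) = (\<Sum>i<N. y0 i s)" if s: "s < S" for s
    using N y0 s unfolding ystar_def slack_def by (simp add: sum.distrib sum.delta)
  show "(\<Sum>i<N. pen_val (n i) (c i) (A i) S (X i) M (ystar i)) \<le> lpr_cost N n c zo"
    unfolding lpr_cost_def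
  proof (rule sum_mono)
    fix i assume "i \<in> {..<N}"
    then have i: "i < N" by simp
    have "slack s \<ge> 0" if "s < S" for s using feas that unfolding lpr_feas_def slack_def by simp
    then have "p1_feas (n i) (A i) S (X i) (ystar i) (zo i) 0"
      using feas i unfolding p1_feas_def lpr_feas_def ystar_def by auto
    then show "pen_val (n i) (c i) (A i) S (X i) M (ystar i) \<le> dotp (n i) (c i) (zo i)"
      using penalized_agent.pen_val_le[OF ag[rule_format, OF i]] by fastforce
  qed
qed

lemma lpr_opt_of_pen_val_sum_le:
  fixes N S :: nat and n :: "nat \<Rightarrow> nat"
  assumes ag: "\<forall>i<N. penalized_agent (n i) (X i) M"
    and opt: "lpr_opt N S n c A b r X zo" and sl: "slater_point N S n A b r X zh"
    and M: "penalty_threshold N S n c A b r zo zh + 1 \<le> M"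
    and yinf: "\<forall>s<S. (\<Sum>i<N. yinf i s) = b s - r s"
    and sopt: "\<forall>i<N. sub_opt (n i) (c i) (A i) S (X i) (yinf i) (zinf i)"
    and le: "(\<Sum>i<N. pen_val (n i) (c i) (A i) S (X i) M (yinf i)) \<le> lpr_cost N n c zo"
  shows "lpr_opt N S n c A b r X zinf"
proof -
  obtain zz vv where f: "\<And>i. i < N \<Longrightarrow> p1_feas (n i) (A i) S (X i) (yinf i) (zz i) (vv i)"
    and val: "\<And>i. i < N \<Longrightarrow> dotp (n i) (c i) (zz i) + M * vv i = pen_val (n i) (c i) (A i) S (X i) M (yinf i)"
    using pen_val_attained_all[OF ag] by metis
  have vv0: "0 \<le> vv i" if "i < N" for i using f[OF that] unfolding p1_feas_def by simp
  have sum_val: "(\<Sum>i<N. dotp (n i) (c i) (zz i) + M * vv i) = (\<Sum>i<N. pen_val (n i) (c i) (A i) S (X i) M (yinf i))"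
    using val by (intro sum.cong) auto
  \<comment> \<open>since M exceeds the penalty threshold, the limit allocation admits no violation\<close>
  have "lpr_cost N n c zo + (M - penalty_threshold N S n c A b r zo zh) * (\<Sum>i<N. vv i)
      \<le> (\<Sum>i<N. dotp (n i) (c i) (zz i) + M * vv i)"
    using f by (intro lpr_penalized_cost_ge[OF opt sl yinf]) auto
  moreover have "1 * (\<Sum>i<N. vv i) \<le> (M - penalty_threshold N S n c A b r zo zh) * (\<Sum>i<N. vv i)"
    using M vv0 by (intro mult_right_mono sum_nonneg) auto
  ultimately have "(\<Sum>i<N. vv i) \<le> 0" using le sum_val by linarith
  then have "(\<Sum>i<N. vv i) = 0" using vv0 by (intro order_antisym sum_nonneg) auto
  then have vvz: "vv i = 0" if "i < N" for i using sum_nonneg_eq_0_iff[of "{..<N}" vv] vv0 that by auto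
  have "dotp (n i) (c i) (zinf i) \<le> dotp (n i) (c i) (zz i)" if i: "i < N" for i
    using sopt f[OF i] vvz[OF i] i unfolding sub_opt_def sub_feas_def p1_feas_def by auto
  then have "lpr_cost N n c zinf \<le> (\<Sum>i<N. dotp (n i) (c i) (zz i) + M * vv i)"
    unfolding lpr_cost_def using vvz by (intro sum_mono) auto
  then have cost: "lpr_cost N n c zinf \<le> lpr_cost N n c zo" using le sum_val by linarith
  have feas: "lpr_feas N S n A b r X zinf" unfolding lpr_feas_def
  proof (intro conjI allI impI)
    fix i assume "i < N" then show "zinf i \<in> convh (X i)" using sopt unfolding sub_opt_def sub_feas_def by blast
  next
    fix s assume s: "s < S"
    have "(\<Sum>i<N. dotp (n i) (A i s) (zinf i)) \<le> (\<Sum>i<N. yinf i s)"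
      using sopt s unfolding sub_opt_def sub_feas_def by (intro sum_mono) auto
    then show "(\<Sum>i<N. dotp (n i) (A i s) (zinf i)) \<le> b s - r s" using yinf s by simp
  qed
  show ?thesis
    using feas cost opt unfolding lpr_opt_def lpr_cost_def by (meson order_trans)
qed

lemma algorithm_limit_lpr_opt:
  fixes N S :: nat and n :: "nat \<Rightarrow> nat"
  assumes N: "0 < N"
    and X: "\<forall>i<N. (\<forall>x\<in>X i. \<forall>j\<ge>n i. x j = 0) \<and> X i \<noteq> {} \<and> compact (X i)"
    and opt: "lpr_opt N S n c A b r X zo" and sl: "slater_point N S n A b r X zh"
    and M: "penalty_threshold N S n c A b r zo zh + 1 \<le> M"
    and conn: "conn_undirected N Nb" and aB: "assumptionB \<alpha>"
    and run: "algo_run N S n c A b r X Nb M \<alpha> y z v mu"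
    and lim: "\<forall>i<N. \<forall>s<S. (\<lambda>t. y t i s) \<longlonglongrightarrow> yinf i s"
    and sopt: "\<forall>i<N. sub_opt (n i) (c i) (A i) S (X i) (yinf i) (zinf i)"
  shows "lpr_opt N S n c A b r X zinf"
proof -
  have "0 \<le> penalty_threshold N S n c A b r zo zh"
    using sl unfolding penalty_threshold_def slater_point_def by simp
  then have ag: "\<forall>i<N. penalized_agent (n i) (X i) M"
    using X M unfolding penalized_agent_def by auto
  have pd: "\<And>t i. i < N \<Longrightarrow> p1_pd_opt (n i) (c i) (A i) S (X i) M (y t i) (z t i) (v t i) (mu t i)"
    using run unfolding algo_run_def by blast
  have sums: "\<forall>s<S. (\<Sum>i<N. y t i s) = b s - r s" for t
    using algo_run_alloc_sum[OF conn run] by blast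
  have sums_inf: "\<forall>s<S. (\<Sum>i<N. yinf i s) = b s - r s"
  proof (intro allI impI)
    fix s assume s: "s < S"
    have "(\<lambda>t. \<Sum>i<N. y t i s) \<longlonglongrightarrow> (\<Sum>i<N. yinf i s)" using lim s by (intro tendsto_sum) auto
    moreover have "(\<lambda>t. \<Sum>i<N. y t i s) \<longlonglongrightarrow> b s - r s" using sums s by simp
    ultimately show "(\<Sum>i<N. yinf i s) = b s - r s" by (rule LIMSEQ_unique)
  qed
  obtain ystar where ystar: "\<And>s. s < S \<Longrightarrow> (\<Sum>i<N. ystar i s) = (\<Sum>i<N. y 0 i s)"
    "(\<Sum>i<N. pen_val (n i) (c i) (A i) S (X i) M (ystar i)) \<le> lpr_cost N n c zo"
    using reference_allocation[OF N ag opt sums[of 0]] by blast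
  have "(\<Sum>i<N. pen_val (n i) (c i) (A i) S (X i) M (yinf i)) \<le> lpr_cost N n c zo"
  proof (rule subgradient_consensus_limit_le[OF conn aB, where Mb=M and ystar=ystar])
    show "y (Suc t) i s = y t i s + \<alpha> t * (\<Sum>j\<in>Nb i. mu t i s - mu t j s)" if "i < N" "s < S" for t i s
      using run that unfolding algo_run_def by blast
    show "pen_val (n i) (c i) (A i) S (X i) M (y t i) - (\<Sum>s<S. mu t i s * (y' s - y t i s))
        \<le> pen_val (n i) (c i) (A i) S (X i) M y'" if "i < N" for t i y'
      using penalized_agent.dual_opt_subgradient[OF ag[rule_format, OF that] pd[OF that]] .
    show "\<bar>mu t i s\<bar> \<le> M" if "i < N" "s < S" for t i s
      using penalized_agent.dual_opt_abs_le[OF ag[rule_format, OF that(1)] pd[OF that(1)] that(2)] .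
    show "lpr_cost N n c zo \<le> (\<Sum>i<N. pen_val (n i) (c i) (A i) S (X i) M (y t i))" for t
      using lpr_cost_le_pen_val_sum[OF ag opt sl _ sums] M by simp
    show "(\<lambda>t. \<Sum>i<N. pen_val (n i) (c i) (A i) S (X i) M (y t i))
        \<longlonglongrightarrow> (\<Sum>i<N. pen_val (n i) (c i) (A i) S (X i) M (yinf i))"
      by (rule pen_val_sum_tendsto[OF ag lim])
  qed (use ystar in auto)
  then show ?thesis by (rule lpr_opt_of_pen_val_sum_le[OF ag opt sl M sums_inf sopt])
qed

lemma cost_gap_bound:
  fixes N S :: nat and n :: "nat \<Rightarrow> nat"
  assumes zopt: "lpr_opt N S n c A b r X zinf"
    and sopt: "\<forall>i<N. sub_opt (n i) (c i) (A i) S (X i) (yinf i) (zinf i)"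
    and lex: "\<forall>i<N. p3_lexopt (n i) (c i) (A i) S (X i) (yinf i) (xinf i) (\<rho>inf i) (\<xi>inf i)"
    and sl: "slater_point N S n A b r X zh" and \<sigma>0: "0 \<le> \<sigma>" and r: "\<forall>s<S. r s \<le> \<sigma>"
    and milp_feasible: "\<exists>x. milp_feas N S n A b X x"
  shows "(\<Sum>i<N. dotp (n i) (c i) (xinf i)) - J_milp N S n c A b X
    \<le> (\<Sum>i\<in>{i. i < N \<and> zinf i \<notin> X i}. dotp (n i) (c i) (xinf i) - pval (n i) (c i) (A i) S (X i) (yinf i))
      + \<sigma> / zeta N S n A b r zh *
        (\<Sum>i<N. dotp (n i) (c i) (zh i) - pval (n i) (c i) (A i) S (X i) (yinf i))"
proof -
  define I where "I = {i. i < N \<and> zinf i \<notin> X i}"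
  define q where "q = \<sigma> / zeta N S n A b r zh"
  define cx where "cx i = dotp (n i) (c i) (xinf i)" for i
  define cz where "cz i = dotp (n i) (c i) (zinf i)" for i
  have pv: "pval (n i) (c i) (A i) S (X i) (yinf i) = cz i" if "i < N" for i
    unfolding cz_def using sopt that by (simp add: sub_opt_pval)
  have "cx i \<le> cz i" if "i \<in> {..<N} - I" for i
    using p3_lexopt_cost_le[of "n i" "c i" "A i" S "X i" "yinf i" "xinf i" "\<rho>inf i" "\<xi>inf i" "zinf i"]
      lex sopt that unfolding I_def cx_def cz_def sub_opt_def by auto
  then have rest: "(\<Sum>i\<in>{..<N} - I. cx i) \<le> (\<Sum>i\<in>{..<N} - I. cz i)" by (rule sum_mono)
  have split: "(\<Sum>i<N. g i) = (\<Sum>i\<in>I. g i) + (\<Sum>i\<in>{..<N} - I. g i)" for g :: "nat \<Rightarrow> real"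
  proof -
    have "I \<subseteq> {..<N}" unfolding I_def by auto
    then show ?thesis by (metis finite_lessThan sum.subset_diff add.commute)
  qed
  have milp: "(1 + q) * lpr_cost N n c zinf - q * lpr_cost N n c zh \<le> J_milp N S n c A b X"
    unfolding q_def by (rule J_milp_lower_bound[OF zopt sl \<sigma>0 r milp_feasible])
  have first: "(\<Sum>i\<in>I. cx i - pval (n i) (c i) (A i) S (X i) (yinf i)) = (\<Sum>i\<in>I. cx i) - (\<Sum>i\<in>I. cz i)"
    using pv unfolding I_def by (simp add: sum_subtractf)
  have second: "(\<Sum>i<N. dotp (n i) (c i) (zh i) - pval (n i) (c i) (A i) S (X i) (yinf i))
      = lpr_cost N n c zh - lpr_cost N n c zinf"
    using pv unfolding lpr_cost_def cz_def by (simp add: sum_subtractf)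
  have "lpr_cost N n c zinf = (\<Sum>i\<in>I. cz i) + (\<Sum>i\<in>{..<N} - I. cz i)"
    unfolding lpr_cost_def cz_def[symmetric] by (rule split)
  then have "(\<Sum>i<N. cx i) \<le> ((\<Sum>i\<in>I. cx i) - (\<Sum>i\<in>I. cz i)) + lpr_cost N n c zinf"
    using split[of cx] rest by linarith
  then have "(\<Sum>i<N. cx i) - J_milp N S n c A b X
      \<le> ((\<Sum>i\<in>I. cx i) - (\<Sum>i\<in>I. cz i)) + lpr_cost N n c zinf
        - ((1 + q) * lpr_cost N n c zinf - q * lpr_cost N n c zh)"
    using milp by linarith
  also have "\<dots> = ((\<Sum>i\<in>I. cx i) - (\<Sum>i\<in>I. cz i)) + q * (lpr_cost N n c zh - lpr_cost N n c zinf)"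
    by (simp add: algebra_simps)
  finally show ?thesis unfolding I_def[symmetric] q_def[symmetric] cx_def[symmetric] first second .
qed

theorem theorem2:
  fixes N S :: nat
    and n Zc mr :: "nat \<Rightarrow> nat"
    and D :: "nat \<Rightarrow> nat \<Rightarrow> nat \<Rightarrow> real" and d :: "nat \<Rightarrow> nat \<Rightarrow> real"
    and c :: "nat \<Rightarrow> nat \<Rightarrow> real" and A :: "nat \<Rightarrow> nat \<Rightarrow> nat \<Rightarrow> real" and b :: "nat \<Rightarrow> real"
    and xL :: "nat \<Rightarrow> nat \<Rightarrow> real" and lL :: "nat \<Rightarrow> real"
  assumes N_pos: "1 \<le> N" and S_pos: "1 \<le> S"
    and Z_le: "\<forall>i<N. Zc i \<le> n i"
    and X_ne_compact: "\<forall>i<N. Xset (n i) (Zc i) (mr i) (D i) (d i) \<noteq> {} \<and>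
                               compact (Xset (n i) (Zc i) (mr i) (D i) (d i))"
    and milp_feasible: "\<exists>x. milp_feas N S n A b (\<lambda>i. Xset (n i) (Zc i) (mr i) (D i) (d i)) x"
    and xL_optimal: "\<forall>i<N. xL_opt (n i) (A i) S (Xset (n i) (Zc i) (mr i) (D i) (d i)) (xL i) (lL i)"
    and assmA: "assumptionA N S n c A b
                  (\<lambda>s. sigma_asy N S n A (\<lambda>i. Xset (n i) (Zc i) (mr i) (D i) (d i)) xL)
                  (\<lambda>i. Xset (n i) (Zc i) (mr i) (D i) (d i))"
    and assmC: "\<exists>zh. slater_point N S n A b
                  (\<lambda>s. sigma_asy N S n A (\<lambda>i. Xset (n i) (Zc i) (mr i) (D i) (d i)) xL)
                  (\<lambda>i. Xset (n i) (Zc i) (mr i) (D i) (d i)) zh"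
  shows "\<exists>M0>0. \<forall>M\<ge>M0. \<forall>Nb \<alpha> y z v mu yinf xinf \<rho>inf \<xi>inf zinf zh.
    (let X = (\<lambda>i. Xset (n i) (Zc i) (mr i) (D i) (d i));
         \<sigma> = sigma_asy N S n A X xL;
         r = (\<lambda>s. \<sigma>)
     in conn_undirected N Nb \<and> assumptionB \<alpha> \<and>
        algo_run N S n c A b r X Nb M \<alpha> y z v mu \<and>
        (\<forall>i<N. \<forall>s<S. (\<lambda>t. y t i s) \<longlonglongrightarrow> yinf i s) \<and>
        (\<forall>i<N. p3_lexopt (n i) (c i) (A i) S (X i) (yinf i) (xinf i) (\<rho>inf i) (\<xi>inf i)) \<and>
        (\<forall>i<N. sub_opt (n i) (c i) (A i) S (X i) (yinf i) (zinf i)) \<and>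
        slater_point N S n A b r X zh
     \<longrightarrow> card {i. i < N \<and> zinf i \<notin> X i} \<le> S + 1 \<and>
         (\<Sum>i<N. dotp (n i) (c i) (xinf i)) - J_milp N S n c A b X
           \<le> (\<Sum>i\<in>{i. i < N \<and> zinf i \<notin> X i}.
                 dotp (n i) (c i) (xinf i) - pval (n i) (c i) (A i) S (X i) (yinf i))
             + \<sigma> / zeta N S n A b r zh *
               (\<Sum>i<N. dotp (n i) (c i) (zh i) - pval (n i) (c i) (A i) S (X i) (yinf i)))"
proof -
  define X where "X = (\<lambda>i. Xset (n i) (Zc i) (mr i) (D i) (d i))"
  have Xfold: "Xset (n i) (Zc i) (mr i) (D i) (d i) = X i" for i unfolding X_def by simp
  define \<sigma> where "\<sigma> = sigma_asy N S n A X xL"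
  define r where "r = (\<lambda>s::nat. \<sigma>)"
  have X: "\<forall>i<N. (\<forall>x\<in>X i. \<forall>j\<ge>n i. x j = 0) \<and> X i \<noteq> {} \<and> compact (X i)"
    using X_ne_compact unfolding Xfold unfolding X_def Xset_def by auto
  obtain zo where zo: "lpr_opt N S n c A b r X zo"
    and uniq: "\<And>z'. lpr_opt N S n c A b r X z' \<Longrightarrow> \<forall>i<N. z' i = zo i"
    using assmA unfolding Xfold X_def[symmetric] \<sigma>_def[symmetric] r_def[symmetric] assumptionA_def by blast
  obtain zh0 where zh0: "slater_point N S n A b r X zh0"
    using assmC unfolding Xfold X_def[symmetric] \<sigma>_def[symmetric] r_def[symmetric] by blast
  have \<sigma>0: "0 \<le> \<sigma>"
    unfolding \<sigma>_def using N_pos S_pos X xL_optimal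
    by (intro sigma_asy_nonneg) (auto simp: Xfold xL_opt_def)
  have N: "0 < N" using N_pos by simp
  have "0 \<le> penalty_threshold N S n c A b r zo zh0"
    using zh0 unfolding penalty_threshold_def slater_point_def by simp
  then show ?thesis
    unfolding Let_def Xfold unfolding X_def[symmetric] \<sigma>_def[symmetric] r_def[symmetric]
  proof (intro exI[of _ "penalty_threshold N S n c A b r zo zh0 + 1"] conjI allI impI, goal_cases)
    case (2 M Nb \<alpha> y z v mu yinf xinf \<rho>inf \<xi>inf zinf zh)
    then have "lpr_opt N S n c A b r X zinf" by (intro algorithm_limit_lpr_opt[OF N X zo zh0]) auto
    then show ?case using lpr_unique_opt_few_non_vertex_blocks[OF uniq] by fastforce
  next
    case (3 M Nb \<alpha> y z v mu yinf xinf \<rho>inf \<xi>inf zinf zh)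
    then have "lpr_opt N S n c A b r X zinf" by (intro algorithm_limit_lpr_opt[OF N X zo zh0]) auto
    then show ?case using 3 milp_feasible unfolding Xfold X_def[symmetric] r_def
      by (intro cost_gap_bound[OF _ _ _ _ \<sigma>0]) auto
  qed simp
qed

end
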